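(* In the setting below, let $a,b\in\mathbb{C}$ be such that $aI+\Gamma$ and $bI+\Gamma$ are invertible, and suppose $I+M(n,m)$ is invertible for all $(n,m)\in\mathbb{Z}^2$. Then $S(a,b)=c\,(bI+\Gamma)^{-1}(I+M)^{-1}(aI+\Gamma)^{-1}r$ satisfies the NQC equation $$\frac{1-(p+b)\hat{\tilde S}(a,b)+(p-a)\hat S(a,b)}{1-(q+b)\hat{\tilde S}(a,b)+(q-a)\tilde S(a,b)}=\frac{1-(q+a)\hat S(a,b)+(q-b)S(a,b)}{1-(p+a)\tilde S(a,b)+(p-b)S(a,b)}$$ (wherever the denominators are nonzero).
   Context: Setting: $p,q\in\mathbb{C}$; $\tilde f(n,m)=f(n+1,m)$, $\hat f(n,m)=f(n,m+1)$, $\hat{\tilde f}(n,m)=f(n+1,m+1)$. $\Gamma=\mathrm{Diag}(\mathrm{Diag}(k_1,\dots,k_{N_1}),\Gamma_J^{[N_2]}(\kappa_2),\dots,\Gamma_J^{[N_s]}(\kappa_s))$ with $\Gamma^{[N]}_J(\kappa)$ the $N\times N$ matrix with $\kappa$ on the diagonal and $1$ on the subdiagonal; all eigenvalues $\lambda,\mu$ of $\Gamma$ satisfy $\lambda+\mu\ne0$, and $p,q\notin\{\pm\lambda\}$. $c=(c^{(1)},\dots,c^{(s)})$ a constant row vector (block lengths $N_1,\dots,N_s$). With $\rho(k)=\big(\tfrac{p+k}{p-k}\big)^n\big(\tfrac{q+k}{q-k}\big)^m\rho^0$ and $\rho_i=\rho(k_i)$: $r=(\rho_1,\dots,\rho_{N_1},r_J(\kappa_2),\dots,r_J(\kappa_s))^T$,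 $r_J(\kappa)=(\partial_k^l\rho/l!|_{k=\kappa})_{l=0}^{N_j-1}$; $M=\mathcal{A}FGH$ where $F=\mathrm{Diag}(\rho_1,\dots,\rho_{N_1},F_J(\kappa_2),\dots)$ with $F_J(\kappa)$ lower triangular, $(i,j)$ entry $\partial_k^{i-j}\rho|_{\kappa}/(i-j)!$; $H=\mathrm{Diag}(c_1,\dots,c_{N_1},H_J(c^{(2)}),\dots)$ with $H_J(d)$ having $(i,j)$ entry $d_{i+j-1}$ if $i+j-1\le N_j$ else $0$; $G$ symmetric block matrix with $G_{1,1}=(1/(k_i+k_j))$, $G_{1,j}$ with $(l,t)$ entry $-(-1/(k_l+\kappa_j))^t$, $G_{i,j}$ ($1<i\le j$) with $(l,t)$ entry $\binom{l+t-2}{l-1}(-1)^{l+t}/(\kappa_i+\kappa_j)^{l+t-1}$; and $r$ is replaced by $\mathcal{A}r$, where $\mathcal{A}=\mathrm{Diag}(I_{N_1},\mathcal{A}_2,\dots,\mathcal{A}_s)$, each $\mathcal{A}_j$ a constant lower triangular Toeplitz matrix. *)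

theory Defs
  imports "HOL-Analysis.Analysis" "Jordan_Normal_Form.Gauss_Jordan_Elimination"
begin

text \<open>Block bookkeeping. A global (0-based) index i is mapped to (block number, local 0-based index).\<close>
fun bidx :: "nat list \<Rightarrow> nat \<Rightarrow> nat \<times> nat" where
  "bidx [] i = (0, i)"
| "bidx (s # ss) i = (if i < s then (0, i) else (let (j, l) = bidx ss (i - s) in (Suc j, l)))"

text \<open>The full list of diagonal blocks of Gamma: first the N1 simple eigenvalues k_i
  (1x1 blocks), then the Jordan blocks (kappa_j, N_j), j = 2..s.\<close>
definition blocks :: "complex list \<Rightarrow> (complex \<times> nat) list \<Rightarrow> (complex \<times> nat) list" where
  "blocks ks jbs = map (\<lambda>k. (k, 1)) ks @ jbs"

definition dimN :: "complex list \<Rightarrow> (complex \<times> nat) list \<Rightarrow> nat" where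
  "dimN ks jbs = sum_list (map snd (blocks ks jbs))"

definition blk :: "complex list \<Rightarrow> (complex \<times> nat) list \<Rightarrow> nat \<Rightarrow> nat" where
  "blk ks jbs i = fst (bidx (map snd (blocks ks jbs)) i)"

definition loc :: "complex list \<Rightarrow> (complex \<times> nat) list \<Rightarrow> nat \<Rightarrow> nat" where
  "loc ks jbs i = snd (bidx (map snd (blocks ks jbs)) i)"

definition eig :: "complex list \<Rightarrow> (complex \<times> nat) list \<Rightarrow> nat \<Rightarrow> complex" where
  "eig ks jbs i = fst (blocks ks jbs ! blk ks jbs i)"

definition rho :: "complex \<Rightarrow> complex \<Rightarrow> complex \<Rightarrow> int \<Rightarrow> int \<Rightarrow> complex \<Rightarrow> complex" where
  "rho p q rho0 n m k = ((p + k) / (p - k)) powi n * ((q + k) / (q - k)) powi m * rho0"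

definition Gam :: "complex list \<Rightarrow> (complex \<times> nat) list \<Rightarrow> complex mat" where
  "Gam ks jbs = mat (dimN ks jbs) (dimN ks jbs) (\<lambda>(i, j).
     if blk ks jbs i = blk ks jbs j then
       (if loc ks jbs i = loc ks jbs j then eig ks jbs i
        else if loc ks jbs i = Suc (loc ks jbs j) then 1 else 0)
     else 0)"

definition Fm :: "complex \<Rightarrow> complex \<Rightarrow> complex \<Rightarrow> complex list \<Rightarrow> (complex \<times> nat) list
    \<Rightarrow> int \<Rightarrow> int \<Rightarrow> complex mat" where
  "Fm p q rho0 ks jbs n m = mat (dimN ks jbs) (dimN ks jbs) (\<lambda>(i, j).
     if blk ks jbs i = blk ks jbs j \<and> loc ks jbs j \<le> loc ks jbs i then
       (deriv ^^ (loc ks jbs i - loc ks jbs j)) (rho p q rho0 n m) (eig ks jbs i)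
         / of_nat (fact (loc ks jbs i - loc ks jbs j))
     else 0)"

definition rv :: "complex \<Rightarrow> complex \<Rightarrow> complex \<Rightarrow> complex list \<Rightarrow> (complex \<times> nat) list
    \<Rightarrow> int \<Rightarrow> int \<Rightarrow> complex vec" where
  "rv p q rho0 ks jbs n m = vec (dimN ks jbs) (\<lambda>i.
     (deriv ^^ (loc ks jbs i)) (rho p q rho0 n m) (eig ks jbs i) / of_nat (fact (loc ks jbs i)))"

text \<open>The constant row vector c = (c^(1),...,c^(s)); c1 = c^(1) (length N1), cJ ! (j-2) = c^(j).\<close>
definition cblocks :: "complex list \<Rightarrow> complex list list \<Rightarrow> complex list list" where
  "cblocks c1 cJ = map (\<lambda>x. [x]) c1 @ cJ"

definition cv :: "complex list \<Rightarrow> (complex \<times> nat) list \<Rightarrow> complex list \<Rightarrow> complex list list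
    \<Rightarrow> complex vec" where
  "cv ks jbs c1 cJ = vec (dimN ks jbs) (\<lambda>i. cblocks c1 cJ ! blk ks jbs i ! loc ks jbs i)"

text \<open>H = Diag(c_1,...,c_N1, H_J(c^(2)),...), H_J(d) with (i,j) entry d_{i+j-1} if i+j-1 \<le> N_j, else 0
  (1-based); in 0-based local indices l, t: d ! (l+t) if l + t < N_j.\<close>
definition Hm :: "complex list \<Rightarrow> (complex \<times> nat) list \<Rightarrow> complex list \<Rightarrow> complex list list
    \<Rightarrow> complex mat" where
  "Hm ks jbs c1 cJ = mat (dimN ks jbs) (dimN ks jbs) (\<lambda>(i, j).
     if blk ks jbs i = blk ks jbs j \<and> loc ks jbs i + loc ks jbs j < snd (blocks ks jbs ! blk ks jbs i)
     then cblocks c1 cJ ! blk ks jbs i ! (loc ks jbs i + loc ks jbs j)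
     else 0)"

text \<open>For blocks with eigenvalues kappa_I, kappa_J and 1-based local
  indices (l,t) the entry is binom(l+t-2, l-1) (-1)^(l+t) / (kappa_I+kappa_J)^(l+t-1); this specialises to
  G_11 = (1/(k_i+k_j)) and G_1j with (l,t)-entry -(-1/(k_l+kappa_j))^t. Here written 0-based.\<close>
definition Gm :: "complex list \<Rightarrow> (complex \<times> nat) list \<Rightarrow> complex mat" where
  "Gm ks jbs = mat (dimN ks jbs) (dimN ks jbs) (\<lambda>(i, j).
     of_nat ((loc ks jbs i + loc ks jbs j) choose (loc ks jbs i))
       * (-1) ^ (loc ks jbs i + loc ks jbs j)
       / (eig ks jbs i + eig ks jbs j) ^ (loc ks jbs i + loc ks jbs j + 1))"

text \<open>A = Diag(I_N1, A_2, ..., A_s), A_j lower triangular Toeplitz with first column aJ ! (j-2).\<close>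
definition ablocks :: "complex list \<Rightarrow> complex list list \<Rightarrow> complex list list" where
  "ablocks ks aJ = map (\<lambda>_. [1]) ks @ aJ"

definition Am :: "complex list \<Rightarrow> (complex \<times> nat) list \<Rightarrow> complex list list \<Rightarrow> complex mat" where
  "Am ks jbs aJ = mat (dimN ks jbs) (dimN ks jbs) (\<lambda>(i, j).
     if blk ks jbs i = blk ks jbs j \<and> loc ks jbs j \<le> loc ks jbs i
     then ablocks ks aJ ! blk ks jbs i ! (loc ks jbs i - loc ks jbs j)
     else 0)"

definition Mm :: "complex \<Rightarrow> complex \<Rightarrow> complex \<Rightarrow> complex list \<Rightarrow> (complex \<times> nat) list
    \<Rightarrow> complex list \<Rightarrow> complex list list \<Rightarrow> complex list list \<Rightarrow> int \<Rightarrow> int \<Rightarrow> complex mat" where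
  "Mm p q rho0 ks jbs c1 cJ aJ n m =
     Am ks jbs aJ * Fm p q rho0 ks jbs n m * Gm ks jbs * Hm ks jbs c1 cJ"

definition minv :: "complex mat \<Rightarrow> complex mat" where
  "minv A = the (mat_inverse A)"

definition Sab :: "complex \<Rightarrow> complex \<Rightarrow> complex \<Rightarrow> complex list \<Rightarrow> (complex \<times> nat) list
    \<Rightarrow> complex list \<Rightarrow> complex list list \<Rightarrow> complex list list \<Rightarrow> complex \<Rightarrow> complex \<Rightarrow> int \<Rightarrow> int \<Rightarrow> complex" where
  "Sab p q rho0 ks jbs c1 cJ aJ a b n m =
     (let N = dimN ks jbs; Gm' = Gam ks jbs in
      cv ks jbs c1 cJ \<bullet>
        ((minv (b \<cdot>\<^sub>m 1\<^sub>m N + Gm') * minv (1\<^sub>m N + Mm p q rho0 ks jbs c1 cJ aJ n m)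
          * minv (a \<cdot>\<^sub>m 1\<^sub>m N + Gm')) *\<^sub>v (Am ks jbs aJ *\<^sub>v rv p q rho0 ks jbs n m)))"

end

theory Submission
  imports Defs
begin

text \<open>
  Only three properties of the data enter the argument:
  (1) the rank-one Sylvester equation Gamma M + M Gamma = (A r) c^T;
  (2) the dispersion relations (pI - Gamma) M(n + 1, m) = (pI + Gamma) M(n, m) and
      (pI - Gamma) A r(n + 1, m) = (pI + Gamma) A r(n, m), and their analogues for q and m;
  (3) invertibility of I + M, aI + Gamma and bI + Gamma.
  From these, each of the four expressions 1 - (p + a) S~ + (p - b) S etc. in the NQC equation
  factorises into a product of two factors attached to neighbouring lattice points, and the
  equation reduces to cancelling common factors.
\<close>

lemma entrywise_eq_vec:
  fixes x y :: "'a vec"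
  assumes "x \<in> carrier_vec n" "y \<in> carrier_vec n" "\<And>i. i < n \<Longrightarrow> x $ i = y $ i"
  shows "x = y"
  using assms by (intro eq_vecI) auto

lemma vec_add_solve:
  fixes x y z :: "'a :: ab_group_add vec"
  assumes "x + z = y" "x \<in> carrier_vec n" "z \<in> carrier_vec n"
  shows "z = y - x"
proof (rule entrywise_eq_vec[of _ n])
  fix i assume i: "i < n"
  have "x $ i + z $ i = y $ i" using arg_cong[OF assms(1), of "\<lambda>v. v $ i"] i assms(2,3) by simp
  then show "z $ i = (y - x) $ i" using i assms by (simp add: algebra_simps)
qed (use assms in auto)

lemma mult_mat_vec_carrier_square[simp]:
  "A \<in> carrier_mat n n \<Longrightarrow> v \<in> carrier_vec n \<Longrightarrow> A *\<^sub>v v \<in> carrier_vec n"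
  by (rule mult_mat_vec_carrier)

lemma inverse_apply:
  fixes A B :: "'a :: field mat"
  assumes "A \<in> carrier_mat n n" "B \<in> carrier_mat n n" "A * B = 1\<^sub>m n" "y \<in> carrier_vec n"
  shows "A *\<^sub>v (B *\<^sub>v y) = y"
  using assms by (metis assoc_mult_mat_vec one_mult_mat_vec)

lemma smult_mat_vec:
  fixes A :: "'a :: field mat"
  assumes "A \<in> carrier_mat n n" "v \<in> carrier_vec n"
  shows "(k \<cdot>\<^sub>m A) *\<^sub>v v = k \<cdot>\<^sub>v (A *\<^sub>v v)"
  by (rule eq_vecI) (use assms in \<open>auto simp: scalar_prod_def sum_distrib_left mult.assoc\<close>)

lemma shifted_identity_apply:
  fixes K :: "'a :: field mat"
  assumes "K \<in> carrier_mat n n" "y \<in> carrier_vec n"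
  shows "(a \<cdot>\<^sub>m 1\<^sub>m n + K) *\<^sub>v y = a \<cdot>\<^sub>v y + K *\<^sub>v y"
  using assms by (simp add: add_mult_distrib_mat_vec[of _ n n] smult_mat_vec[of _ n])

lemma identity_plus_apply:
  fixes M :: "'a :: field mat"
  assumes "M \<in> carrier_mat n n" "y \<in> carrier_vec n"
  shows "(1\<^sub>m n + M) *\<^sub>v y = y + M *\<^sub>v y"
  using assms by (simp add: add_mult_distrib_mat_vec[of _ n n])

lemma commute_apply:
  fixes A B :: "'a :: field mat"
  assumes "A \<in> carrier_mat n n" "B \<in> carrier_mat n n" "x \<in> carrier_vec n" "A * B = B * A"
  shows "A *\<^sub>v (B *\<^sub>v x) = B *\<^sub>v (A *\<^sub>v x)"
proof -
  have "A *\<^sub>v (B *\<^sub>v x) = (A * B) *\<^sub>v x" by (rule assoc_mult_mat_vec[symmetric]) (use assms in auto)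
  also have "\<dots> = (B * A) *\<^sub>v x" using assms(4) by simp
  also have "\<dots> = B *\<^sub>v (A *\<^sub>v x)" by (rule assoc_mult_mat_vec) (use assms in auto)
  finally show ?thesis .
qed

lemma shift_apply:
  fixes F F' K :: "'a :: field mat"
  assumes c: "F \<in> carrier_mat N N" "F' \<in> carrier_mat N N" "K \<in> carrier_mat N N" "x \<in> carrier_vec N"
    and e: "p \<cdot>\<^sub>m F' - K * F' = p \<cdot>\<^sub>m F + K * F"
  shows "p \<cdot>\<^sub>v (F' *\<^sub>v x) - K *\<^sub>v (F' *\<^sub>v x) = p \<cdot>\<^sub>v (F *\<^sub>v x) + K *\<^sub>v (F *\<^sub>v x)"
proof -
  have kf: "K * F' \<in> carrier_mat N N" "K * F \<in> carrier_mat N N" using c by auto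
  have "p \<cdot>\<^sub>v (F' *\<^sub>v x) - K *\<^sub>v (F' *\<^sub>v x) = (p \<cdot>\<^sub>m F' - K * F') *\<^sub>v x"
    using c kf by (simp add: minus_mult_distrib_mat_vec[of _ N N] smult_mat_vec[of F' N] assoc_mult_mat_vec[of K N N F' N x])
  also have "\<dots> = (p \<cdot>\<^sub>m F + K * F) *\<^sub>v x" unfolding e ..
  also have "\<dots> = p \<cdot>\<^sub>v (F *\<^sub>v x) + K *\<^sub>v (F *\<^sub>v x)"
    using c kf by (simp add: add_mult_distrib_mat_vec[of _ N N] smult_mat_vec[of F N] assoc_mult_mat_vec[of K N N F N x])
  finally show ?thesis .
qed

lemma minv_props:
  fixes A :: "complex mat"
  assumes A: "A \<in> carrier_mat n n" and inv: "invertible_mat A"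
  shows "minv A \<in> carrier_mat n n" "A * minv A = 1\<^sub>m n" "minv A * A = 1\<^sub>m n"
proof -
  from inv obtain B where AB: "A * B = 1\<^sub>m (dim_row A)" "B * A = 1\<^sub>m (dim_row B)"
    unfolding invertible_mat_def inverts_mat_def by blast
  have "dim_col B = n" using arg_cong[OF AB(1), of dim_col] A by simp
  moreover have "dim_row B = n" using arg_cong[OF AB(2), of dim_col] A by simp
  ultimately have B: "B \<in> carrier_mat n n" by auto
  have U: "A \<in> Units (ring_mat TYPE(complex) n ())"
    unfolding Units_def using A B AB by (auto simp: ring_mat_def)
  have "mat_inverse A \<noteq> None" using mat_inverse(1)[OF A, where b="()"] U by blast
  then obtain C where C: "mat_inverse A = Some C" by auto
  from mat_inverse(2)[OF A C] have "A * C = 1\<^sub>m n \<and> C * A = 1\<^sub>m n \<and> C \<in> carrier_mat n n" .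
  moreover have "minv A = C" using C by (simp add: minv_def)
  ultimately show "minv A \<in> carrier_mat n n" "A * minv A = 1\<^sub>m n" "minv A * A = 1\<^sub>m n" by auto
qed

section \<open>The abstract NQC mechanism\<close>

lemma resolvent_apply:
  fixes K R :: "'a :: field mat"
  assumes K: "K \<in> carrier_mat n n" and R: "R \<in> carrier_mat n n"
    and left: "R * (a \<cdot>\<^sub>m 1\<^sub>m n + K) = 1\<^sub>m n" and right: "(a \<cdot>\<^sub>m 1\<^sub>m n + K) * R = 1\<^sub>m n"
    and y: "y \<in> carrier_vec n"
  shows "K *\<^sub>v (R *\<^sub>v y) = y - a \<cdot>\<^sub>v (R *\<^sub>v y)" "R *\<^sub>v (K *\<^sub>v y) = y - a \<cdot>\<^sub>v (R *\<^sub>v y)"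
proof -
  have aK: "a \<cdot>\<^sub>m 1\<^sub>m n + K \<in> carrier_mat n n" using K by simp
  have "a \<cdot>\<^sub>v (R *\<^sub>v y) + K *\<^sub>v (R *\<^sub>v y) = y"
    using inverse_apply[OF aK R right y] shifted_identity_apply[OF K, of "R *\<^sub>v y"] R y by simp
  then show "K *\<^sub>v (R *\<^sub>v y) = y - a \<cdot>\<^sub>v (R *\<^sub>v y)"
    by (rule vec_add_solve[of _ _ _ n]) (use K R y in auto)
  have "R *\<^sub>v (a \<cdot>\<^sub>v y + K *\<^sub>v y) = y"
    using inverse_apply[OF R aK left y] shifted_identity_apply[OF K y] by simp
  then have "a \<cdot>\<^sub>v (R *\<^sub>v y) + R *\<^sub>v (K *\<^sub>v y) = y"
    using K R y by (simp add: mult_add_distrib_mat_vec[of _ n n] mult_mat_vec[of _ n n])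
  then show "R *\<^sub>v (K *\<^sub>v y) = y - a \<cdot>\<^sub>v (R *\<^sub>v y)"
    by (rule vec_add_solve[of _ _ _ n]) (use K R y in auto)
qed

lemma resolvent_shift:
  fixes K R :: "'a :: field mat"
  assumes K: "K \<in> carrier_mat n n" and R: "R \<in> carrier_mat n n"
    and left: "R * (a \<cdot>\<^sub>m 1\<^sub>m n + K) = 1\<^sub>m n" and right: "(a \<cdot>\<^sub>m 1\<^sub>m n + K) * R = 1\<^sub>m n"
    and u: "u \<in> carrier_vec n" "u' \<in> carrier_vec n"
    and shift: "p \<cdot>\<^sub>v u' - K *\<^sub>v u' = p \<cdot>\<^sub>v u + K *\<^sub>v u"
  shows "p \<cdot>\<^sub>v (R *\<^sub>v u) + K *\<^sub>v (R *\<^sub>v u) = (p + a) \<cdot>\<^sub>v (R *\<^sub>v u') - u'"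
proof -
  note apply_R = resolvent_apply[OF K R left right]
  have "R *\<^sub>v (p \<cdot>\<^sub>v u' - K *\<^sub>v u') = R *\<^sub>v (p \<cdot>\<^sub>v u + K *\<^sub>v u)" using shift by simp
  then have h: "p \<cdot>\<^sub>v (R *\<^sub>v u') - (u' - a \<cdot>\<^sub>v (R *\<^sub>v u')) = p \<cdot>\<^sub>v (R *\<^sub>v u) + (u - a \<cdot>\<^sub>v (R *\<^sub>v u))"
    using K R u by (simp add: mult_add_distrib_mat_vec[of _ n n] mult_minus_distrib_mat_vec[of _ n n]
        mult_mat_vec[of _ n n] apply_R)
  show ?thesis
  proof (rule entrywise_eq_vec[of _ n])
    fix i assume i: "i < n"
    have "p * (R *\<^sub>v u') $ i - (u' $ i - a * (R *\<^sub>v u') $ i) = p * (R *\<^sub>v u) $ i + (u $ i - a * (R *\<^sub>v u) $ i)"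
      using arg_cong[OF h, of "\<lambda>v. v $ i"] i K R u by simp
    then show "(p \<cdot>\<^sub>v (R *\<^sub>v u) + K *\<^sub>v (R *\<^sub>v u)) $ i = ((p + a) \<cdot>\<^sub>v (R *\<^sub>v u') - u') $ i"
      using i K R u by (simp add: apply_R algebra_simps)
  qed (use K R u in auto)
qed

lemma dressing_shift:
  fixes K M M' :: "'a :: field mat"
  assumes mats: "K \<in> carrier_mat n n" "M \<in> carrier_mat n n" "M' \<in> carrier_mat n n"
    and vecs: "c \<in> carrier_vec n" "u' \<in> carrier_vec n" "w \<in> carrier_vec n"
    and sylvester: "\<And>y. y \<in> carrier_vec n \<Longrightarrow> K *\<^sub>v (M' *\<^sub>v y) + M' *\<^sub>v (K *\<^sub>v y) = (c \<bullet> y) \<cdot>\<^sub>v u'"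
    and shift: "\<And>y. y \<in> carrier_vec n \<Longrightarrow>
       p \<cdot>\<^sub>v (M' *\<^sub>v y) - K *\<^sub>v (M' *\<^sub>v y) = p \<cdot>\<^sub>v (M *\<^sub>v y) + K *\<^sub>v (M *\<^sub>v y)"
  shows "(p \<cdot>\<^sub>v w + K *\<^sub>v w) + M' *\<^sub>v (p \<cdot>\<^sub>v w + K *\<^sub>v w)
     = p \<cdot>\<^sub>v (w + M *\<^sub>v w) + K *\<^sub>v (w + M *\<^sub>v w) + (c \<bullet> w) \<cdot>\<^sub>v u'"
proof (rule entrywise_eq_vec[of _ n])
  fix i assume i: "i < n"
  have syl_i: "(K *\<^sub>v (M' *\<^sub>v w)) $ i + (M' *\<^sub>v (K *\<^sub>v w)) $ i = (c \<bullet> w) * u' $ i"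
    using arg_cong[OF sylvester[OF vecs(3)], of "\<lambda>v. v $ i"] i mats vecs by simp
  have shift_i: "p * (M' *\<^sub>v w) $ i - (K *\<^sub>v (M' *\<^sub>v w)) $ i = p * (M *\<^sub>v w) $ i + (K *\<^sub>v (M *\<^sub>v w)) $ i"
    using arg_cong[OF shift[OF vecs(3)], of "\<lambda>v. v $ i"] i mats vecs by simp
  have "M' *\<^sub>v (p \<cdot>\<^sub>v w + K *\<^sub>v w) = p \<cdot>\<^sub>v (M' *\<^sub>v w) + M' *\<^sub>v (K *\<^sub>v w)"
    "K *\<^sub>v (w + M *\<^sub>v w) = K *\<^sub>v w + K *\<^sub>v (M *\<^sub>v w)"
    using mats vecs by (simp_all add: mult_add_distrib_mat_vec[of _ n n] mult_mat_vec[of _ n n])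
  then show "((p \<cdot>\<^sub>v w + K *\<^sub>v w) + M' *\<^sub>v (p \<cdot>\<^sub>v w + K *\<^sub>v w)) $ i
      = (p \<cdot>\<^sub>v (w + M *\<^sub>v w) + K *\<^sub>v (w + M *\<^sub>v w) + (c \<bullet> w) \<cdot>\<^sub>v u') $ i"
    using i mats vecs eq_diff_eq[THEN iffD2, OF syl_i] shift_i
    by (simp del: index_mult_mat_vec add: algebra_simps)
qed (use mats vecs in auto)

text \<open>The proof computes c Rb z for z = (pI + K) V Ra u in two ways: directly, and
  through the dressing and resolvent shifts above.\<close>

lemma nqc_factorisation:
  fixes K M M' V V' Ra Rb :: "'a :: field mat" and u u' c :: "'a vec"
  assumes mats: "K \<in> carrier_mat n n" "M \<in> carrier_mat n n" "M' \<in> carrier_mat n n"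
      "V \<in> carrier_mat n n" "V' \<in> carrier_mat n n" "Ra \<in> carrier_mat n n" "Rb \<in> carrier_mat n n"
    and vecs: "u \<in> carrier_vec n" "u' \<in> carrier_vec n" "c \<in> carrier_vec n"
    and sylvester: "\<And>y. y \<in> carrier_vec n \<Longrightarrow> K *\<^sub>v (M' *\<^sub>v y) + M' *\<^sub>v (K *\<^sub>v y) = (c \<bullet> y) \<cdot>\<^sub>v u'"
    and shift_M: "\<And>y. y \<in> carrier_vec n \<Longrightarrow>
       p \<cdot>\<^sub>v (M' *\<^sub>v y) - K *\<^sub>v (M' *\<^sub>v y) = p \<cdot>\<^sub>v (M *\<^sub>v y) + K *\<^sub>v (M *\<^sub>v y)"
    and shift_u: "p \<cdot>\<^sub>v u' - K *\<^sub>v u' = p \<cdot>\<^sub>v u + K *\<^sub>v u"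
    and inv_V: "(1\<^sub>m n + M) * V = 1\<^sub>m n" and inv_V': "V' * (1\<^sub>m n + M') = 1\<^sub>m n"
    and inv_Ra: "Ra * (a \<cdot>\<^sub>m 1\<^sub>m n + K) = 1\<^sub>m n" "(a \<cdot>\<^sub>m 1\<^sub>m n + K) * Ra = 1\<^sub>m n"
    and inv_Rb: "Rb * (b \<cdot>\<^sub>m 1\<^sub>m n + K) = 1\<^sub>m n"
  shows "1 - (p + a) * (c \<bullet> (Rb *\<^sub>v (V' *\<^sub>v (Ra *\<^sub>v u')))) + (p - b) * (c \<bullet> (Rb *\<^sub>v (V *\<^sub>v (Ra *\<^sub>v u))))
     = (1 - c \<bullet> (V *\<^sub>v (Ra *\<^sub>v u))) * (1 - c \<bullet> (Rb *\<^sub>v (V' *\<^sub>v u')))"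
proof -
  define t where "t = Ra *\<^sub>v u"
  define t' where "t' = Ra *\<^sub>v u'"
  define w where "w = V *\<^sub>v t"
  define X where "X = c \<bullet> w"
  define z where "z = p \<cdot>\<^sub>v w + K *\<^sub>v w"
  note lin = mult_add_distrib_mat_vec[of _ n n] mult_minus_distrib_mat_vec[of _ n n] mult_mat_vec[of _ n n]
    scalar_prod_add_distrib[of _ n] scalar_prod_minus_distrib[of _ n]
  have vecs': "t \<in> carrier_vec n" "t' \<in> carrier_vec n" "w \<in> carrier_vec n" "z \<in> carrier_vec n"
    using mats vecs by (simp_all add: t_def t'_def w_def z_def)
  have w_dressed: "w + M *\<^sub>v w = t"
    using inverse_apply[OF _ mats(4) inv_V vecs'(1)] identity_plus_apply[OF mats(2) vecs'(3)] mats
    by (simp add: w_def)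
  have z_dressed: "z + M' *\<^sub>v z = ((p + a) \<cdot>\<^sub>v t' - u') + X \<cdot>\<^sub>v u'"
    using dressing_shift[OF mats(1-3) vecs(3,2) vecs'(3) sylvester shift_M] w_dressed
      resolvent_shift[OF mats(1,6) inv_Ra vecs(1,2) shift_u]
    by (simp add: z_def X_def t_def t'_def)
  have z_undressed: "z = (p + a) \<cdot>\<^sub>v (V' *\<^sub>v t') - V' *\<^sub>v u' + X \<cdot>\<^sub>v (V' *\<^sub>v u')"
  proof -
    have "z = V' *\<^sub>v (z + M' *\<^sub>v z)"
      using inverse_apply[OF mats(5) _ inv_V' vecs'(4)] identity_plus_apply[OF mats(3) vecs'(4)] mats
      by simp
    then show ?thesis unfolding z_dressed using mats vecs vecs' by (simp add: lin)
  qed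
  have z_split: "z = (p - b) \<cdot>\<^sub>v w + (b \<cdot>\<^sub>v w + K *\<^sub>v w)"
    unfolding z_def by (rule entrywise_eq_vec[of _ n]) (use mats vecs' in \<open>auto simp: algebra_simps\<close>)
  have Rb_z: "Rb *\<^sub>v z = (p - b) \<cdot>\<^sub>v (Rb *\<^sub>v w) + w"
    using inverse_apply[OF mats(7) _ inv_Rb vecs'(3)] shifted_identity_apply[OF mats(1) vecs'(3)] mats vecs'
    by (subst z_split) (simp add: lin)
  have "c \<bullet> (Rb *\<^sub>v z) = (p - b) * (c \<bullet> (Rb *\<^sub>v w)) + X"
    unfolding Rb_z X_def using mats vecs vecs' by (simp add: lin)
  moreover have "c \<bullet> (Rb *\<^sub>v z)
      = (p + a) * (c \<bullet> (Rb *\<^sub>v (V' *\<^sub>v t'))) - c \<bullet> (Rb *\<^sub>v (V' *\<^sub>v u')) + X * (c \<bullet> (Rb *\<^sub>v (V' *\<^sub>v u')))"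
    by (subst z_undressed) (use mats vecs vecs' in \<open>simp add: lin\<close>)
  ultimately show ?thesis
    unfolding t_def[symmetric] t'_def[symmetric] w_def[symmetric] X_def[symmetric]
    by (simp add: algebra_simps)
qed

lemma shift_reverse:
  fixes K :: "'a :: field mat"
  assumes "K \<in> carrier_mat n n" "x \<in> carrier_vec n" "x' \<in> carrier_vec n"
    and "p \<cdot>\<^sub>v x' - K *\<^sub>v x' = p \<cdot>\<^sub>v x + K *\<^sub>v x"
  shows "(- p) \<cdot>\<^sub>v x - K *\<^sub>v x = (- p) \<cdot>\<^sub>v x' + K *\<^sub>v x'"
proof (rule entrywise_eq_vec[of _ n])
  fix i assume i: "i < n"
  have "p * x' $ i - (K *\<^sub>v x') $ i = p * x $ i + (K *\<^sub>v x) $ i"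
    using arg_cong[OF assms(4), of "\<lambda>v. v $ i"] i assms(1-3) by (simp del: index_mult_mat_vec)
  then show "((- p) \<cdot>\<^sub>v x - K *\<^sub>v x) $ i = ((- p) \<cdot>\<^sub>v x' + K *\<^sub>v x') $ i"
    using i assms(1-3) by (simp del: index_mult_mat_vec add: algebra_simps)
qed (use assms in auto)

text \<open>The companion factorisation of 1 - (p + b) S' + (p - a) S. It is the previous one with the
  roles of the two lattice points exchanged and p replaced by -p.\<close>

lemma nqc_factorisation_dual:
  fixes K M M' V V' Ra Rb :: "'a :: field mat" and u u' c :: "'a vec"
  assumes mats: "K \<in> carrier_mat n n" "M \<in> carrier_mat n n" "M' \<in> carrier_mat n n"
      "V \<in> carrier_mat n n" "V' \<in> carrier_mat n n" "Ra \<in> carrier_mat n n" "Rb \<in> carrier_mat n n"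
    and vecs: "u \<in> carrier_vec n" "u' \<in> carrier_vec n" "c \<in> carrier_vec n"
    and sylvester: "\<And>y. y \<in> carrier_vec n \<Longrightarrow> K *\<^sub>v (M *\<^sub>v y) + M *\<^sub>v (K *\<^sub>v y) = (c \<bullet> y) \<cdot>\<^sub>v u"
    and shift_M: "\<And>y. y \<in> carrier_vec n \<Longrightarrow>
       p \<cdot>\<^sub>v (M' *\<^sub>v y) - K *\<^sub>v (M' *\<^sub>v y) = p \<cdot>\<^sub>v (M *\<^sub>v y) + K *\<^sub>v (M *\<^sub>v y)"
    and shift_u: "p \<cdot>\<^sub>v u' - K *\<^sub>v u' = p \<cdot>\<^sub>v u + K *\<^sub>v u"
    and inv_V: "V * (1\<^sub>m n + M) = 1\<^sub>m n" and inv_V': "(1\<^sub>m n + M') * V' = 1\<^sub>m n"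
    and inv_Ra: "Ra * (a \<cdot>\<^sub>m 1\<^sub>m n + K) = 1\<^sub>m n" "(a \<cdot>\<^sub>m 1\<^sub>m n + K) * Ra = 1\<^sub>m n"
    and inv_Rb: "Rb * (b \<cdot>\<^sub>m 1\<^sub>m n + K) = 1\<^sub>m n"
  shows "1 - (p + b) * (c \<bullet> (Rb *\<^sub>v (V' *\<^sub>v (Ra *\<^sub>v u')))) + (p - a) * (c \<bullet> (Rb *\<^sub>v (V *\<^sub>v (Ra *\<^sub>v u))))
     = (1 - c \<bullet> (Rb *\<^sub>v (V *\<^sub>v u))) * (1 - c \<bullet> (V' *\<^sub>v (Ra *\<^sub>v u')))"
proof -
  have shift_M': "(- p) \<cdot>\<^sub>v (M *\<^sub>v y) - K *\<^sub>v (M *\<^sub>v y) = (- p) \<cdot>\<^sub>v (M' *\<^sub>v y) + K *\<^sub>v (M' *\<^sub>v y)"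
    if "y \<in> carrier_vec n" for y
    using shift_reverse[OF mats(1) _ _ shift_M[OF that]] mats that by simp
  have shift_u': "(- p) \<cdot>\<^sub>v u - K *\<^sub>v u = (- p) \<cdot>\<^sub>v u' + K *\<^sub>v u'"
    by (rule shift_reverse[OF mats(1) vecs(1,2) shift_u])
  from nqc_factorisation[OF mats(1,3,2,5,4,6,7) vecs(2,1,3) sylvester shift_M' shift_u' inv_V' inv_V inv_Ra inv_Rb]
  show ?thesis by (simp add: algebra_simps)
qed

text \<open>The NQC equation is a cancellation of common factors once the four expressions are factorised.\<close>

lemma cross_ratio_of_factorisations:
  fixes x y y' z :: "'a :: field"
  assumes "P = x * y'" "Q = x * y" "P' = y * z" "Q' = y' * z" and "Q' \<noteq> 0" "P \<noteq> 0"
  shows "P' / Q' = Q / P"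
  using assms by (simp add: field_simps)

locale nqc_lattice =
  fixes N :: nat and K :: "complex mat" and c :: "complex vec"
    and M :: "int \<Rightarrow> int \<Rightarrow> complex mat" and u :: "int \<Rightarrow> int \<Rightarrow> complex vec"
    and p q :: complex
  assumes K_carrier: "K \<in> carrier_mat N N" and c_carrier: "c \<in> carrier_vec N"
    and M_carrier: "M n m \<in> carrier_mat N N" and u_carrier: "u n m \<in> carrier_vec N"
    and sylvester: "y \<in> carrier_vec N \<Longrightarrow> K *\<^sub>v (M n m *\<^sub>v y) + M n m *\<^sub>v (K *\<^sub>v y) = (c \<bullet> y) \<cdot>\<^sub>v u n m"
    and M_shift_n: "y \<in> carrier_vec N \<Longrightarrow>
       p \<cdot>\<^sub>v (M (n + 1) m *\<^sub>v y) - K *\<^sub>v (M (n + 1) m *\<^sub>v y) = p \<cdot>\<^sub>v (M n m *\<^sub>v y) + K *\<^sub>v (M n m *\<^sub>v y)"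
    and M_shift_m: "y \<in> carrier_vec N \<Longrightarrow>
       q \<cdot>\<^sub>v (M n (m + 1) *\<^sub>v y) - K *\<^sub>v (M n (m + 1) *\<^sub>v y) = q \<cdot>\<^sub>v (M n m *\<^sub>v y) + K *\<^sub>v (M n m *\<^sub>v y)"
    and u_shift_n: "p \<cdot>\<^sub>v u (n + 1) m - K *\<^sub>v u (n + 1) m = p \<cdot>\<^sub>v u n m + K *\<^sub>v u n m"
    and u_shift_m: "q \<cdot>\<^sub>v u n (m + 1) - K *\<^sub>v u n (m + 1) = q \<cdot>\<^sub>v u n m + K *\<^sub>v u n m"
    and dressing_invertible: "invertible_mat (1\<^sub>m N + M n m)"
begin

definition S_fun :: "complex \<Rightarrow> complex \<Rightarrow> int \<Rightarrow> int \<Rightarrow> complex" where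
  "S_fun a b n m = c \<bullet> ((minv (b \<cdot>\<^sub>m 1\<^sub>m N + K) * minv (1\<^sub>m N + M n m) * minv (a \<cdot>\<^sub>m 1\<^sub>m N + K)) *\<^sub>v u n m)"

theorem NQC:
  assumes inv_a: "invertible_mat (a \<cdot>\<^sub>m 1\<^sub>m N + K)" and inv_b: "invertible_mat (b \<cdot>\<^sub>m 1\<^sub>m N + K)"
  defines "S \<equiv> S_fun a b"
  shows "\<forall>n m :: int.
     1 - (q + b) * S (n+1) (m+1) + (q - a) * S (n+1) m \<noteq> 0 \<longrightarrow>
     1 - (p + a) * S (n+1) m + (p - b) * S n m \<noteq> 0 \<longrightarrow>
     (1 - (p + b) * S (n+1) (m+1) + (p - a) * S n (m+1))
       / (1 - (q + b) * S (n+1) (m+1) + (q - a) * S (n+1) m)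
     = (1 - (q + a) * S n (m+1) + (q - b) * S n m)
       / (1 - (p + a) * S (n+1) m + (p - b) * S n m)"
proof (intro allI impI)
  fix n m :: int
  define Ra where "Ra = minv (a \<cdot>\<^sub>m 1\<^sub>m N + K)"
  define Rb where "Rb = minv (b \<cdot>\<^sub>m 1\<^sub>m N + K)"
  define V where "V n m = minv (1\<^sub>m N + M n m)" for n m
  have shifted_carrier: "a \<cdot>\<^sub>m 1\<^sub>m N + K \<in> carrier_mat N N" "b \<cdot>\<^sub>m 1\<^sub>m N + K \<in> carrier_mat N N"
    "\<And>n m. 1\<^sub>m N + M n m \<in> carrier_mat N N"
    using K_carrier M_carrier by simp_all
  note Ra = minv_props[OF shifted_carrier(1) inv_a, folded Ra_def]
    and Rb = minv_props[OF shifted_carrier(2) inv_b, folded Rb_def]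
    and V = minv_props[OF shifted_carrier(3) dressing_invertible, folded V_def]
  note carriers = K_carrier M_carrier u_carrier c_carrier
  have S_nested: "S n m = c \<bullet> (Rb *\<^sub>v (V n m *\<^sub>v (Ra *\<^sub>v u n m)))" for n m
    using Ra(1) Rb(1) V(1) K_carrier u_carrier
    by (simp add: S_def S_fun_def Ra_def[symmetric] Rb_def[symmetric] V_def[symmetric]
        assoc_mult_mat_vec[of _ N N _ N])
  let ?X = "\<lambda>n m. 1 - c \<bullet> (V n m *\<^sub>v (Ra *\<^sub>v u n m))"
  let ?Y = "\<lambda>n m. 1 - c \<bullet> (Rb *\<^sub>v (V n m *\<^sub>v u n m))"
  have P: "1 - (p + a) * S (n+1) m + (p - b) * S n m = ?X n m * ?Y (n+1) m"
    unfolding S_nested using carriers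
    by (intro nqc_factorisation[OF _ _ _ V(1) V(1) Ra(1) Rb(1) _ _ _ sylvester M_shift_n u_shift_n
          V(2) V(3) Ra(3,2) Rb(3)]) auto
  have Q: "1 - (q + a) * S n (m+1) + (q - b) * S n m = ?X n m * ?Y n (m+1)"
    unfolding S_nested using carriers
    by (intro nqc_factorisation[OF _ _ _ V(1) V(1) Ra(1) Rb(1) _ _ _ sylvester M_shift_m u_shift_m
          V(2) V(3) Ra(3,2) Rb(3)]) auto
  have P': "1 - (p + b) * S (n+1) (m+1) + (p - a) * S n (m+1) = ?Y n (m+1) * ?X (n+1) (m+1)"
    unfolding S_nested using carriers
    by (intro nqc_factorisation_dual[OF _ _ _ V(1) V(1) Ra(1) Rb(1) _ _ _ sylvester M_shift_n u_shift_n
          V(3) V(2) Ra(3,2) Rb(3)]) auto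
  have Q': "1 - (q + b) * S (n+1) (m+1) + (q - a) * S (n+1) m = ?Y (n+1) m * ?X (n+1) (m+1)"
    unfolding S_nested using carriers
    by (intro nqc_factorisation_dual[OF _ _ _ V(1) V(1) Ra(1) Rb(1) _ _ _ sylvester M_shift_m u_shift_m
          V(3) V(2) Ra(3,2) Rb(3)]) auto
  assume "1 - (q + b) * S (n+1) (m+1) + (q - a) * S (n+1) m \<noteq> 0"
    and "1 - (p + a) * S (n+1) m + (p - b) * S n m \<noteq> 0"
  then show "(1 - (p + b) * S (n+1) (m+1) + (p - a) * S n (m+1))
       / (1 - (q + b) * S (n+1) (m+1) + (q - a) * S (n+1) m)
     = (1 - (q + a) * S n (m+1) + (q - b) * S n m)
       / (1 - (p + a) * S (n+1) m + (p - b) * S n m)"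
    by (rule cross_ratio_of_factorisations[OF P Q P' Q'])
qed

end

lemma bidx_props:
  "i < sum_list s \<Longrightarrow> fst (bidx s i) < length s \<and> snd (bidx s i) < s ! fst (bidx s i)
     \<and> i = sum_list (take (fst (bidx s i)) s) + snd (bidx s i)"
proof (induction s arbitrary: i)
  case Nil then show ?case by simp
next
  case (Cons x s)
  show ?case
  proof (cases "i < x")
    case True then show ?thesis by simp
  next
    case False
    with Cons.prems have "i - x < sum_list s" by simp
    from Cons.IH[OF this] False show ?thesis
      by (auto simp: split_beta)
  qed
qed

lemma bidx_inv:
  "b < length s \<Longrightarrow> l < s ! b \<Longrightarrow> bidx s (sum_list (take b s) + l) = (b, l)
     \<and> sum_list (take b s) + l < sum_list s"
proof (induction s arbitrary: b)
  case Nil then show ?case by simp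
next
  case (Cons x s)
  show ?case
  proof (cases b)
    case 0 then show ?thesis using Cons.prems by simp
  next
    case (Suc b')
    with Cons.prems have "b' < length s" "l < s ! b'" by auto
    from Cons.IH[OF this] Suc show ?thesis by auto
  qed
qed

definition block_sizes :: "complex list \<Rightarrow> (complex \<times> nat) list \<Rightarrow> nat list" where
  "block_sizes ks jbs = map snd (blocks ks jbs)"

definition block_start :: "complex list \<Rightarrow> (complex \<times> nat) list \<Rightarrow> nat \<Rightarrow> nat" where
  "block_start ks jbs b = sum_list (take b (block_sizes ks jbs))"

lemma dimN_block_sizes: "dimN ks jbs = sum_list (block_sizes ks jbs)"
  by (simp add: dimN_def block_sizes_def)

lemma idx_props:
  assumes "i < dimN ks jbs"
  shows "blk ks jbs i < length (blocks ks jbs)"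
    "loc ks jbs i < snd (blocks ks jbs ! blk ks jbs i)"
    "i = block_start ks jbs (blk ks jbs i) + loc ks jbs i"
  using bidx_props[of i "block_sizes ks jbs"] assms
  by (auto simp: dimN_block_sizes blk_def loc_def block_start_def block_sizes_def)

lemma idx_inv:
  assumes "b < length (blocks ks jbs)" "l < snd (blocks ks jbs ! b)"
  shows "blk ks jbs (block_start ks jbs b + l) = b" "loc ks jbs (block_start ks jbs b + l) = l"
    "block_start ks jbs b + l < dimN ks jbs"
  using bidx_inv[of b "block_sizes ks jbs" l] assms
  by (auto simp: dimN_block_sizes blk_def loc_def block_start_def block_sizes_def)

lemma idx_eq:
  assumes "i < dimN ks jbs" "j < dimN ks jbs"
  shows "(i = j) = (blk ks jbs i = blk ks jbs j \<and> loc ks jbs i = loc ks jbs j)"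
proof
  assume "i = j" then show "blk ks jbs i = blk ks jbs j \<and> loc ks jbs i = loc ks jbs j" by simp
next
  assume "blk ks jbs i = blk ks jbs j \<and> loc ks jbs i = loc ks jbs j"
  then show "i = j" using idx_props(3)[OF assms(1)] idx_props(3)[OF assms(2)] by simp
qed

lemma loc_le: "i < dimN ks jbs \<Longrightarrow> loc ks jbs i \<le> i"
  using idx_props(3)[of i ks jbs] by linarith

lemma prev_idx:
  assumes "i < dimN ks jbs" "0 < loc ks jbs i"
  shows "blk ks jbs (i - 1) = blk ks jbs i" "loc ks jbs (i - 1) = loc ks jbs i - 1"
    "eig ks jbs (i - 1) = eig ks jbs i" "i - 1 < dimN ks jbs"
proof -
  note P = idx_props[OF assms(1)]
  have e: "i - 1 = block_start ks jbs (blk ks jbs i) + (loc ks jbs i - 1)" using P(3) assms(2) by linarith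
  have l: "loc ks jbs i - 1 < snd (blocks ks jbs ! blk ks jbs i)" using P(2) by linarith
  show "blk ks jbs (i - 1) = blk ks jbs i" "loc ks jbs (i - 1) = loc ks jbs i - 1"
    using idx_inv[OF P(1) l] e by auto
  then show "eig ks jbs (i - 1) = eig ks jbs i" by (simp add: eig_def)
  show "i - 1 < dimN ks jbs" using assms(1) by linarith
qed

lemma next_idx_iff:
  assumes "i < dimN ks jbs"
  shows "(Suc i < dimN ks jbs \<and> 0 < loc ks jbs (Suc i)) = (Suc (loc ks jbs i) < snd (blocks ks jbs ! blk ks jbs i))"
proof
  assume a: "Suc i < dimN ks jbs \<and> 0 < loc ks jbs (Suc i)"
  then have "blk ks jbs (Suc i - 1) = blk ks jbs (Suc i)" "loc ks jbs (Suc i - 1) = loc ks jbs (Suc i) - 1"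
    using prev_idx[of "Suc i"] by auto
  then show "Suc (loc ks jbs i) < snd (blocks ks jbs ! blk ks jbs i)"
    using idx_props(2)[of "Suc i"] a by auto
next
  note P = idx_props[OF assms]
  assume a: "Suc (loc ks jbs i) < snd (blocks ks jbs ! blk ks jbs i)"
  have e: "Suc i = block_start ks jbs (blk ks jbs i) + Suc (loc ks jbs i)" using P(3) by simp
  show "Suc i < dimN ks jbs \<and> 0 < loc ks jbs (Suc i)"
    using idx_inv[OF P(1) a] e by auto
qed

lemma next_idx:
  assumes "i < dimN ks jbs" "Suc (loc ks jbs i) < snd (blocks ks jbs ! blk ks jbs i)"
  shows "blk ks jbs (Suc i) = blk ks jbs i" "loc ks jbs (Suc i) = Suc (loc ks jbs i)"
    "eig ks jbs (Suc i) = eig ks jbs i" "Suc i < dimN ks jbs"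
proof -
  note P = idx_props[OF assms(1)]
  have e: "Suc i = block_start ks jbs (blk ks jbs i) + Suc (loc ks jbs i)" using P(3) by simp
  show "blk ks jbs (Suc i) = blk ks jbs i" "loc ks jbs (Suc i) = Suc (loc ks jbs i)" "Suc i < dimN ks jbs"
    using idx_inv[OF P(1) assms(2)] e by auto
  then show "eig ks jbs (Suc i) = eig ks jbs i" by (simp add: eig_def)
qed

lemma block_head:
  assumes i: "i < dimN ks jbs"
  shows "blk ks jbs (block_start ks jbs (blk ks jbs i)) = blk ks jbs i" "loc ks jbs (block_start ks jbs (blk ks jbs i)) = 0"
    "block_start ks jbs (blk ks jbs i) < dimN ks jbs"
  using idx_inv[OF idx_props(1)[OF i], of 0] idx_props(2)[OF i] by auto

lemma block_head_iff:
  assumes i: "i < dimN ks jbs" and k: "k < dimN ks jbs"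
  shows "(blk ks jbs k = blk ks jbs i \<and> loc ks jbs k = 0) = (k = block_start ks jbs (blk ks jbs i))"
  using idx_eq[OF k block_head(3)[OF i]] block_head[OF i] by auto

lemma eig_mem:
  assumes "i < dimN ks jbs"
  shows "eig ks jbs i \<in> fst ` set (blocks ks jbs)"
  unfolding eig_def using idx_props(1)[OF assms] by auto

lemma Gam_carrier[simp]: "Gam ks jbs \<in> carrier_mat (dimN ks jbs) (dimN ks jbs)"
  by (simp add: Gam_def)

lemma Gam_dims[simp]: "dim_row (Gam ks jbs) = dimN ks jbs" "dim_col (Gam ks jbs) = dimN ks jbs"
  by (simp_all add: Gam_def)

lemma Gam_entry:
  assumes "i < dimN ks jbs" "k < dimN ks jbs"
  shows "Gam ks jbs $$ (i, k) = (if k = i then eig ks jbs i else 0)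
            + (if 0 < loc ks jbs i \<and> k = i - 1 then 1 else 0)"
proof -
  have G: "Gam ks jbs $$ (i, k) = (if blk ks jbs i = blk ks jbs k then
       (if loc ks jbs i = loc ks jbs k then eig ks jbs i
        else if loc ks jbs i = Suc (loc ks jbs k) then 1 else 0) else 0)"
    unfolding Gam_def using assms by simp
  show ?thesis
  proof (cases "k = i")
    case True
    have "\<not> (0 < loc ks jbs i \<and> i = i - 1)" using loc_le[OF assms(1)] by linarith
    then show ?thesis unfolding G using True by simp
  next
    case ne: False
    show ?thesis
    proof (cases "0 < loc ks jbs i \<and> k = i - 1")
      case True
      then have "blk ks jbs k = blk ks jbs i" "loc ks jbs k = loc ks jbs i - 1"
        using prev_idx[OF assms(1)] by simp_all
      moreover have "loc ks jbs i = Suc (loc ks jbs k)" using calculation True by linarith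
      ultimately show ?thesis unfolding G using True ne by simp
    next
      case F: False
      have "\<not> (blk ks jbs i = blk ks jbs k \<and> loc ks jbs i = loc ks jbs k)"
        using idx_eq[OF assms] ne by simp
      moreover have "\<not> (blk ks jbs i = blk ks jbs k \<and> loc ks jbs i = Suc (loc ks jbs k))"
      proof
        assume a: "blk ks jbs i = blk ks jbs k \<and> loc ks jbs i = Suc (loc ks jbs k)"
        then have l0: "0 < loc ks jbs i" by simp
        note pv = prev_idx[OF assms(1) l0]
        have "blk ks jbs (i - 1) = blk ks jbs k" "loc ks jbs (i - 1) = loc ks jbs k"
          using pv(1,2) a by simp_all
        then have "i - 1 = k" using idx_eq[OF pv(4) assms(2)] by simp
        with F l0 show False by simp
      qed
      ultimately show ?thesis unfolding G using ne F by auto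
    qed
  qed
qed

lemma mat_mult_entry_sum:
  assumes "A \<in> carrier_mat n n" "B \<in> carrier_mat n n" "i < n" "j < n"
  shows "(A * B) $$ (i, j) = (\<Sum>k = 0..<n. A $$ (i, k) * B $$ (k, j))"
  using assms by (simp add: scalar_prod_def)

lemma Gam_mult_entry:
  assumes X: "X \<in> carrier_mat (dimN ks jbs) (dimN ks jbs)" and ij: "i < dimN ks jbs" "j < dimN ks jbs"
  shows "(Gam ks jbs * X) $$ (i, j) = eig ks jbs i * X $$ (i, j)
     + (if 0 < loc ks jbs i then X $$ (i - 1, j) else 0)"
proof -
  let ?N = "dimN ks jbs"
  have "(Gam ks jbs * X) $$ (i, j) = (\<Sum>k = 0..<?N. Gam ks jbs $$ (i, k) * X $$ (k, j))"
    by (rule mat_mult_entry_sum[OF Gam_carrier X ij])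
  also have "\<dots> = (\<Sum>k = 0..<?N. (if k = i then eig ks jbs i * X $$ (i, j) else 0)
       + (if 0 < loc ks jbs i \<and> k = i - 1 then X $$ (i - 1, j) else 0))"
    by (rule sum.cong) (auto simp: Gam_entry[OF ij(1)] distrib_right)
  also have "\<dots> = eig ks jbs i * X $$ (i, j) + (if 0 < loc ks jbs i then X $$ (i - 1, j) else 0)"
  proof (cases "0 < loc ks jbs i")
    case True
    then have "i - 1 < ?N" using ij by linarith
    with True ij show ?thesis by (simp add: sum.distrib)
  next
    case False
    with ij show ?thesis by (simp add: sum.distrib)
  qed
  finally show ?thesis .
qed

lemma Gam_subdiag_iff:
  assumes "k < dimN ks jbs" "j < dimN ks jbs"
  shows "(0 < loc ks jbs k \<and> j = k - 1) = (k = Suc j \<and> Suc (loc ks jbs j) < snd (blocks ks jbs ! blk ks jbs j))"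
proof
  assume a: "0 < loc ks jbs k \<and> j = k - 1"
  then have "0 < k" using loc_le[OF assms(1)] by linarith
  with a have k: "k = Suc j" by simp
  with a assms next_idx_iff[OF assms(2)] show "k = Suc j \<and> Suc (loc ks jbs j) < snd (blocks ks jbs ! blk ks jbs j)"
    by simp
next
  assume a: "k = Suc j \<and> Suc (loc ks jbs j) < snd (blocks ks jbs ! blk ks jbs j)"
  then show "0 < loc ks jbs k \<and> j = k - 1" using next_idx[OF assms(2)] by simp
qed

lemma mult_Gam_entry:
  assumes X: "X \<in> carrier_mat (dimN ks jbs) (dimN ks jbs)" and ij: "i < dimN ks jbs" "j < dimN ks jbs"
  shows "(X * Gam ks jbs) $$ (i, j) = X $$ (i, j) * eig ks jbs j
     + (if Suc (loc ks jbs j) < snd (blocks ks jbs ! blk ks jbs j) then X $$ (i, Suc j) else 0)"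
proof -
  let ?N = "dimN ks jbs"
  let ?c = "Suc (loc ks jbs j) < snd (blocks ks jbs ! blk ks jbs j)"
  have "(X * Gam ks jbs) $$ (i, j) = (\<Sum>k = 0..<?N. X $$ (i, k) * Gam ks jbs $$ (k, j))"
    by (rule mat_mult_entry_sum[OF X Gam_carrier ij])
  also have "\<dots> = (\<Sum>k = 0..<?N. (if k = j then X $$ (i, j) * eig ks jbs j else 0)
       + (if k = Suc j \<and> ?c then X $$ (i, Suc j) else 0))"
  proof (rule sum.cong[OF refl])
    fix k assume "k \<in> {0..<?N}"
    then have k: "k < ?N" by simp
    show "X $$ (i, k) * Gam ks jbs $$ (k, j) = (if k = j then X $$ (i, j) * eig ks jbs j else 0)
       + (if k = Suc j \<and> ?c then X $$ (i, Suc j) else 0)"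
      unfolding Gam_entry[OF k ij(2)] Gam_subdiag_iff[OF k ij(2)] by (auto simp: distrib_left)
  qed
  also have "\<dots> = X $$ (i, j) * eig ks jbs j + (if ?c then X $$ (i, Suc j) else 0)"
  proof (cases ?c)
    case True
    then have "Suc j < ?N" using next_idx[OF ij(2)] by simp
    with True ij show ?thesis by (simp add: sum.distrib)
  next
    case False
    with ij show ?thesis by (simp add: sum.distrib)
  qed
  finally show ?thesis .
qed

lemma mult_GamT_entry:
  assumes X: "X \<in> carrier_mat (dimN ks jbs) (dimN ks jbs)" and ij: "i < dimN ks jbs" "j < dimN ks jbs"
  shows "(X * transpose_mat (Gam ks jbs)) $$ (i, j) = eig ks jbs j * X $$ (i, j)
     + (if 0 < loc ks jbs j then X $$ (i, j - 1) else 0)"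
proof -
  let ?N = "dimN ks jbs"
  have "(X * transpose_mat (Gam ks jbs)) $$ (i, j) = (\<Sum>k = 0..<?N. X $$ (i, k) * Gam ks jbs $$ (j, k))"
    using X ij by (simp add: scalar_prod_def Gam_def)
  also have "\<dots> = (\<Sum>k = 0..<?N. (if k = j then eig ks jbs j * X $$ (i, j) else 0)
       + (if 0 < loc ks jbs j \<and> k = j - 1 then X $$ (i, j - 1) else 0))"
    by (rule sum.cong) (auto simp: Gam_entry[OF ij(2)] distrib_left)
  also have "\<dots> = eig ks jbs j * X $$ (i, j) + (if 0 < loc ks jbs j then X $$ (i, j - 1) else 0)"
  proof (cases "0 < loc ks jbs j")
    case True
    then have "j - 1 < ?N" using ij by linarith
    with True ij show ?thesis by (simp add: sum.distrib)
  next
    case False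
    with ij show ?thesis by (simp add: sum.distrib)
  qed
  finally show ?thesis .
qed

lemma GamT_mult_entry:
  assumes X: "X \<in> carrier_mat (dimN ks jbs) (dimN ks jbs)" and ij: "i < dimN ks jbs" "j < dimN ks jbs"
  shows "(transpose_mat (Gam ks jbs) * X) $$ (i, j) = eig ks jbs i * X $$ (i, j)
     + (if Suc (loc ks jbs i) < snd (blocks ks jbs ! blk ks jbs i) then X $$ (Suc i, j) else 0)"
proof -
  let ?N = "dimN ks jbs"
  let ?c = "Suc (loc ks jbs i) < snd (blocks ks jbs ! blk ks jbs i)"
  have "(transpose_mat (Gam ks jbs) * X) $$ (i, j) = (\<Sum>k = 0..<?N. Gam ks jbs $$ (k, i) * X $$ (k, j))"
    using X ij by (simp add: scalar_prod_def Gam_def)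
  also have "\<dots> = (\<Sum>k = 0..<?N. (if k = i then eig ks jbs i * X $$ (i, j) else 0)
       + (if k = Suc i \<and> ?c then X $$ (Suc i, j) else 0))"
  proof (rule sum.cong[OF refl])
    fix k assume "k \<in> {0..<?N}"
    then have k: "k < ?N" by simp
    show "Gam ks jbs $$ (k, i) * X $$ (k, j) = (if k = i then eig ks jbs i * X $$ (i, j) else 0)
       + (if k = Suc i \<and> ?c then X $$ (Suc i, j) else 0)"
      unfolding Gam_entry[OF k ij(1)] Gam_subdiag_iff[OF k ij(1)] by (auto simp: distrib_right)
  qed
  also have "\<dots> = eig ks jbs i * X $$ (i, j) + (if ?c then X $$ (Suc i, j) else 0)"
  proof (cases ?c)
    case True
    then have "Suc i < ?N" using next_idx[OF ij(1)] by simp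
    with True ij show ?thesis by (simp add: sum.distrib)
  next
    case False
    with ij show ?thesis by (simp add: sum.distrib)
  qed
  finally show ?thesis .
qed

section \<open>Block Toeplitz matrices\<close>

definition taylor :: "complex \<Rightarrow> complex \<Rightarrow> complex \<Rightarrow> int \<Rightarrow> int \<Rightarrow> complex \<Rightarrow> nat \<Rightarrow> complex" where
  "taylor p q rho0 n m k l = (deriv ^^ l) (rho p q rho0 n m) k / of_nat (fact l)"

text \<open>Block-diagonal lower-triangular Toeplitz matrices, given by their symbol f, where f bl l is
  the entry on the l-th subdiagonal of block bl. Both F and A are of this form, and so is Gamma.\<close>

definition toep :: "complex list \<Rightarrow> (complex \<times> nat) list \<Rightarrow> (nat \<Rightarrow> nat \<Rightarrow> complex) \<Rightarrow> complex mat" where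
  "toep ks jbs f = mat (dimN ks jbs) (dimN ks jbs) (\<lambda>(i, j).
     if blk ks jbs i = blk ks jbs j \<and> loc ks jbs j \<le> loc ks jbs i then f (blk ks jbs i) (loc ks jbs i - loc ks jbs j) else 0)"

definition toep_symbol_Gam :: "complex list \<Rightarrow> (complex \<times> nat) list \<Rightarrow> (nat \<Rightarrow> nat \<Rightarrow> complex) \<Rightarrow> nat \<Rightarrow> nat \<Rightarrow> complex" where
  "toep_symbol_Gam ks jbs f b l = fst (blocks ks jbs ! b) * f b l + (if l = 0 then 0 else f b (l - 1))"

lemma toep_carrier[simp]: "toep ks jbs f \<in> carrier_mat (dimN ks jbs) (dimN ks jbs)"
  by (simp add: toep_def)

lemma toep_entry: "i < dimN ks jbs \<Longrightarrow> j < dimN ks jbs \<Longrightarrow> toep ks jbs f $$ (i, j) =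
   (if blk ks jbs i = blk ks jbs j \<and> loc ks jbs j \<le> loc ks jbs i then f (blk ks jbs i) (loc ks jbs i - loc ks jbs j) else 0)"
  by (simp add: toep_def)

lemma Gam_toep: "Gam ks jbs * toep ks jbs f = toep ks jbs (toep_symbol_Gam ks jbs f)"
proof (rule eq_matI)
  fix i j assume i: "i < dim_row (toep ks jbs (toep_symbol_Gam ks jbs f))" and j: "j < dim_col (toep ks jbs (toep_symbol_Gam ks jbs f))"
  then have i: "i < dimN ks jbs" and j: "j < dimN ks jbs" by (simp_all add: toep_def)
  have e: "eig ks jbs i = fst (blocks ks jbs ! blk ks jbs i)" by (simp add: eig_def)
  show "(Gam ks jbs * toep ks jbs f) $$ (i, j) = toep ks jbs (toep_symbol_Gam ks jbs f) $$ (i, j)"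
    unfolding Gam_mult_entry[OF toep_carrier i j]
  proof (cases "0 < loc ks jbs i")
    case True
    note pv = prev_idx[OF i True]
    show "eig ks jbs i * toep ks jbs f $$ (i, j) + (if 0 < loc ks jbs i then toep ks jbs f $$ (i - 1, j) else 0) =
      toep ks jbs (toep_symbol_Gam ks jbs f) $$ (i, j)"
      unfolding toep_entry[OF i j] toep_entry[OF pv(4) j] pv(1,2) using True
      by (auto simp: toep_symbol_Gam_def e Suc_diff_Suc diff_diff_left)
  next
    case False
    then show "eig ks jbs i * toep ks jbs f $$ (i, j) + (if 0 < loc ks jbs i then toep ks jbs f $$ (i - 1, j) else 0) =
      toep ks jbs (toep_symbol_Gam ks jbs f) $$ (i, j)"
      unfolding toep_entry[OF i j] by (auto simp: toep_symbol_Gam_def e)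
  qed
qed (simp_all add: toep_def)

lemma toep_Gam: "toep ks jbs f * Gam ks jbs = toep ks jbs (toep_symbol_Gam ks jbs f)"
proof (rule eq_matI)
  fix i j assume i: "i < dim_row (toep ks jbs (toep_symbol_Gam ks jbs f))" and j: "j < dim_col (toep ks jbs (toep_symbol_Gam ks jbs f))"
  then have i: "i < dimN ks jbs" and j: "j < dimN ks jbs" by (simp_all add: toep_def)
  let ?c = "Suc (loc ks jbs j) < snd (blocks ks jbs ! blk ks jbs j)"
  have e: "eig ks jbs j = fst (blocks ks jbs ! blk ks jbs j)" by (simp add: eig_def)
  have li: "loc ks jbs i < snd (blocks ks jbs ! blk ks jbs i)" using idx_props(2)[OF i] .
  show "(toep ks jbs f * Gam ks jbs) $$ (i, j) = toep ks jbs (toep_symbol_Gam ks jbs f) $$ (i, j)"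
    unfolding mult_Gam_entry[OF toep_carrier i j]
  proof (cases ?c)
    case True
    note nx = next_idx[OF j True]
    show "toep ks jbs f $$ (i, j) * eig ks jbs j + (if ?c then toep ks jbs f $$ (i, Suc j) else 0) =
      toep ks jbs (toep_symbol_Gam ks jbs f) $$ (i, j)"
      unfolding toep_entry[OF i j] toep_entry[OF i nx(4)] nx(1,2) using True
      by (auto simp: toep_symbol_Gam_def e mult.commute Suc_diff_Suc diff_diff_left)
  next
    case False
    then show "toep ks jbs f $$ (i, j) * eig ks jbs j + (if ?c then toep ks jbs f $$ (i, Suc j) else 0) =
      toep ks jbs (toep_symbol_Gam ks jbs f) $$ (i, j)"
      unfolding toep_entry[OF i j] using li by (auto simp: toep_symbol_Gam_def e mult.commute)
  qed
qed (simp_all add: toep_def)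

lemma Gam_toep_commute: "Gam ks jbs * toep ks jbs f = toep ks jbs f * Gam ks jbs"
  by (simp add: Gam_toep toep_Gam)

lemma toep_cong:
  assumes "\<And>bl l. bl < length (blocks ks jbs) \<Longrightarrow> f bl l = g bl l"
  shows "toep ks jbs f = toep ks jbs g"
  by (rule eq_matI) (auto simp: toep_def assms idx_props(1))

lemma toep_lincomb: "k \<cdot>\<^sub>m toep ks jbs f - toep ks jbs g = toep ks jbs (\<lambda>bl l. k * f bl l - g bl l)"
  "k \<cdot>\<^sub>m toep ks jbs f + toep ks jbs g = toep ks jbs (\<lambda>bl l. k * f bl l + g bl l)"
  by (rule eq_matI; auto simp: toep_def)+

text \<open>The vector e with entry 1 at the first index of every block and 0 elsewhere; a block Toeplitz
  matrix applied to e lists its symbol, so r = F e.\<close>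

definition heads :: "complex list \<Rightarrow> (complex \<times> nat) list \<Rightarrow> complex vec" where
  "heads ks jbs = vec (dimN ks jbs) (\<lambda>i. if loc ks jbs i = 0 then 1 else 0)"

lemma heads_carrier[simp]: "heads ks jbs \<in> carrier_vec (dimN ks jbs)" by (simp add: heads_def)

lemma toep_heads: "i < dimN ks jbs \<Longrightarrow> (toep ks jbs f *\<^sub>v heads ks jbs) $ i = f (blk ks jbs i) (loc ks jbs i)"
proof -
  assume i: "i < dimN ks jbs"
  let ?k0 = "block_start ks jbs (blk ks jbs i)"
  have "(toep ks jbs f *\<^sub>v heads ks jbs) $ i = (\<Sum>k = 0..<dimN ks jbs. toep ks jbs f $$ (i, k) * heads ks jbs $ k)"
    using i by (simp add: mult_mat_vec_def scalar_prod_def toep_def heads_def)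
  also have "\<dots> = (\<Sum>k = 0..<dimN ks jbs. if k = ?k0 then f (blk ks jbs i) (loc ks jbs i) else 0)"
  proof (rule sum.cong[OF refl])
    fix k assume "k \<in> {0..<dimN ks jbs}"
    then have k: "k < dimN ks jbs" by simp
    show "toep ks jbs f $$ (i, k) * heads ks jbs $ k = (if k = ?k0 then f (blk ks jbs i) (loc ks jbs i) else 0)"
      unfolding toep_entry[OF i k] using k block_head_iff[OF i k] by (auto simp: heads_def)
  qed
  also have "\<dots> = f (blk ks jbs i) (loc ks jbs i)" using block_head(3)[OF i] by simp
  finally show ?thesis .
qed

lemma Fm_toep: "Fm p q rho0 ks jbs n m = toep ks jbs (\<lambda>bl l. taylor p q rho0 n m (fst (blocks ks jbs ! bl)) l)"
  by (rule eq_matI) (auto simp: Fm_def toep_def taylor_def eig_def)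

lemma Am_toep: "Am ks jbs aJ = toep ks jbs (\<lambda>bl l. ablocks ks aJ ! bl ! l)"
  by (rule eq_matI) (auto simp: Am_def toep_def)

lemma rv_Fm_heads: "rv p q rho0 ks jbs n m = Fm p q rho0 ks jbs n m *\<^sub>v heads ks jbs"
proof (rule eq_vecI)
  fix i assume "i < dim_vec (Fm p q rho0 ks jbs n m *\<^sub>v heads ks jbs)"
  then have i: "i < dimN ks jbs" by (simp add: Fm_def)
  show "rv p q rho0 ks jbs n m $ i = (Fm p q rho0 ks jbs n m *\<^sub>v heads ks jbs) $ i"
    unfolding Fm_toep toep_heads[OF i] using i by (simp add: rv_def taylor_def eig_def)
qed (simp add: rv_def Fm_def)

lemma cv_carrier[simp]: "cv ks jbs c1 cJ \<in> carrier_vec (dimN ks jbs)" by (simp add: cv_def)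

lemma Gm_carrier[simp]: "Gm ks jbs \<in> carrier_mat (dimN ks jbs) (dimN ks jbs)" by (simp add: Gm_def)

lemma Hm_carrier[simp]: "Hm ks jbs c1 cJ \<in> carrier_mat (dimN ks jbs) (dimN ks jbs)" by (simp add: Hm_def)

lemma dims_simps[simp]: "dim_row (Gm ks jbs) = dimN ks jbs" "dim_col (Gm ks jbs) = dimN ks jbs"
  "dim_row (Hm ks jbs c1 cJ) = dimN ks jbs" "dim_col (Hm ks jbs c1 cJ) = dimN ks jbs"
  "dim_row (Am ks jbs aJ) = dimN ks jbs" "dim_col (Am ks jbs aJ) = dimN ks jbs"
  "dim_row (Fm p q rho0 ks jbs n m) = dimN ks jbs" "dim_col (Fm p q rho0 ks jbs n m) = dimN ks jbs"
  "dim_vec (cv ks jbs c1 cJ) = dimN ks jbs" "dim_vec (heads ks jbs) = dimN ks jbs"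
  "dim_vec (rv p q rho0 ks jbs n m) = dimN ks jbs"
  by (simp_all add: Gm_def Hm_def Am_def Fm_def cv_def heads_def rv_def)

lemma Am_carrier[simp]: "Am ks jbs aJ \<in> carrier_mat (dimN ks jbs) (dimN ks jbs)" by (simp add: Am_toep)

lemma Fm_carrier[simp]: "Fm p q rho0 ks jbs n m \<in> carrier_mat (dimN ks jbs) (dimN ks jbs)" by (simp add: Fm_toep)

lemma rv_carrier[simp]: "rv p q rho0 ks jbs n m \<in> carrier_vec (dimN ks jbs)" by (simp add: rv_def)

lemma Mm_carrier[simp]: "Mm p q rho0 ks jbs c1 cJ aJ n m \<in> carrier_mat (dimN ks jbs) (dimN ks jbs)"
  unfolding Mm_def by (intro mult_carrier_mat[of _ _ "dimN ks jbs"]; simp)+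

section \<open>The Sylvester equation\<close>

definition outer :: "complex vec \<Rightarrow> complex vec \<Rightarrow> complex mat" where
  "outer x y = mat (dim_vec x) (dim_vec y) (\<lambda>(i, j). x $ i * y $ j)"

lemma outer_mult_vec:
  assumes "x \<in> carrier_vec n" "y \<in> carrier_vec n" "w \<in> carrier_vec n"
  shows "outer x y *\<^sub>v w = (y \<bullet> w) \<cdot>\<^sub>v x"
  by (rule eq_vecI) (use assms in \<open>auto simp: outer_def scalar_prod_def sum_distrib_left ac_simps intro!: sum.cong\<close>)

lemma pascal_split:
  assumes n: "l + t = Suc n"
  shows "Suc n choose l = (if 0 < l then n choose (l - 1) else 0) + (if 0 < t then n choose l else 0)"
proof (cases "l = 0 \<or> t = 0")
  case True
  then show ?thesis using n by auto
next
  case False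
  then show ?thesis using choose_reduce_nat[of "Suc n" l] by simp
qed

lemma binomial_cauchy_recurrence:
  fixes s :: complex
  assumes s: "s \<noteq> 0"
  shows "s * (of_nat ((l + t) choose l) * (-1) ^ (l + t) / s ^ (l + t + 1))
    + (if 0 < l then of_nat ((l - 1 + t) choose (l - 1)) * (-1) ^ (l - 1 + t) / s ^ (l - 1 + t + 1) else 0)
    + (if 0 < t then of_nat ((l + (t - 1)) choose l) * (-1) ^ (l + (t - 1)) / s ^ (l + (t - 1) + 1) else 0)
    = (if l = 0 \<and> t = 0 then 1 else 0)"
proof (cases "l = 0 \<and> t = 0")
  case True then show ?thesis using s by simp
next
  case False
  then obtain n where n: "l + t = Suc n" by (metis add_is_0 not0_implies_Suc)
  have key: "of_nat ((Suc n) choose l) = (if 0 < l then of_nat (n choose (l - 1)) else 0)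
      + (if 0 < t then of_nat (n choose l) else (0::complex))"
    using pascal_split[OF n] by simp
  have e1: "l - 1 + t = n" if "0 < l" using that n by linarith
  have e2: "l + (t - 1) = n" if "0 < t" using that n by linarith
  define z where "z = (-1::complex) ^ n / s ^ Suc n"
  have A: "s * (of_nat ((l + t) choose l) * (-1) ^ (l + t) / s ^ (l + t + 1)) = - of_nat ((Suc n) choose l) * z"
    unfolding n z_def using s by (simp add: field_simps)
  have B: "(if 0 < l then of_nat ((l - 1 + t) choose (l - 1)) * (-1) ^ (l - 1 + t) / s ^ (l - 1 + t + 1) else 0)
     = (if 0 < l then of_nat (n choose (l - 1)) else 0) * z"
    using e1 by (auto simp: z_def)
  have C: "(if 0 < t then of_nat ((l + (t - 1)) choose l) * (-1) ^ (l + (t - 1)) / s ^ (l + (t - 1) + 1) else 0)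
     = (if 0 < t then of_nat (n choose l) else 0) * z"
    using e2 by (auto simp: z_def)
  show ?thesis unfolding A B C key using False by (simp add: algebra_simps)
qed

lemma G_sylvester:
  assumes eig_sum: "\<And>x y. x \<in> fst ` set (blocks ks jbs) \<Longrightarrow> y \<in> fst ` set (blocks ks jbs) \<Longrightarrow> x + y \<noteq> 0"
  shows "Gam ks jbs * Gm ks jbs + Gm ks jbs * transpose_mat (Gam ks jbs) = outer (heads ks jbs) (heads ks jbs)"
proof (rule eq_matI)
  fix i j assume i: "i < dim_row (outer (heads ks jbs) (heads ks jbs))" and j: "j < dim_col (outer (heads ks jbs) (heads ks jbs))"
  then have i: "i < dimN ks jbs" and j: "j < dimN ks jbs" by (simp_all add: outer_def heads_def)
  let ?li = "loc ks jbs i" and ?lj = "loc ks jbs j" and ?s = "eig ks jbs i + eig ks jbs j"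
  have G: "Gm ks jbs $$ (i, j) = of_nat ((?li + ?lj) choose ?li) * (-1) ^ (?li + ?lj) / ?s ^ (?li + ?lj + 1)"
    using i j by (simp add: Gm_def)
  have G1: "(if 0 < ?li then Gm ks jbs $$ (i - 1, j) else 0) =
     (if 0 < ?li then of_nat ((?li - 1 + ?lj) choose (?li - 1)) * (-1) ^ (?li - 1 + ?lj) / ?s ^ (?li - 1 + ?lj + 1) else 0)"
  proof (cases "0 < ?li")
    case True note pv = prev_idx[OF i True]
    obtain l' where l': "?li = Suc l'" using True not0_implies_Suc by blast
    show ?thesis using True pv j unfolding l' by (simp add: Gm_def l')
  qed simp
  have G2: "(if 0 < ?lj then Gm ks jbs $$ (i, j - 1) else 0) =
     (if 0 < ?lj then of_nat ((?li + (?lj - 1)) choose ?li) * (-1) ^ (?li + (?lj - 1)) / ?s ^ (?li + (?lj - 1) + 1) else 0)"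
  proof (cases "0 < ?lj")
    case True note pv = prev_idx[OF j True]
    obtain l' where l': "?lj = Suc l'" using True not0_implies_Suc by blast
    show ?thesis using True pv i unfolding l' by (simp add: Gm_def l')
  qed simp
  have "(Gam ks jbs * Gm ks jbs + Gm ks jbs * transpose_mat (Gam ks jbs)) $$ (i, j)
     = (Gam ks jbs * Gm ks jbs) $$ (i, j) + (Gm ks jbs * transpose_mat (Gam ks jbs)) $$ (i, j)"
    using i j by (simp add: Gm_def Gam_def)
  also have "\<dots> = ?s * Gm ks jbs $$ (i, j) + (if 0 < ?li then Gm ks jbs $$ (i - 1, j) else 0)
       + (if 0 < ?lj then Gm ks jbs $$ (i, j - 1) else 0)"
    unfolding Gam_mult_entry[OF Gm_carrier i j] mult_GamT_entry[OF Gm_carrier i j] by (simp add: algebra_simps)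
  also have "\<dots> = (if ?li = 0 \<and> ?lj = 0 then 1 else 0)"
    unfolding G G1 G2 by (rule binomial_cauchy_recurrence[OF eig_sum[OF eig_mem[OF i] eig_mem[OF j]]])
  also have "\<dots> = outer (heads ks jbs) (heads ks jbs) $$ (i, j)"
    using i j by (simp add: outer_def heads_def)
  finally show "(Gam ks jbs * Gm ks jbs + Gm ks jbs * transpose_mat (Gam ks jbs)) $$ (i, j) = outer (heads ks jbs) (heads ks jbs) $$ (i, j)" .
qed (simp_all add: outer_def heads_def Gam_def Gm_def)

lemma H_Gam_symmetric: "Hm ks jbs c1 cJ * Gam ks jbs = transpose_mat (Gam ks jbs) * Hm ks jbs c1 cJ"
proof (rule eq_matI)
  fix i j assume i: "i < dim_row (transpose_mat (Gam ks jbs) * Hm ks jbs c1 cJ)"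
     and j: "j < dim_col (transpose_mat (Gam ks jbs) * Hm ks jbs c1 cJ)"
  then have i: "i < dimN ks jbs" and j: "j < dimN ks jbs" by (simp_all add: Hm_def)
  let ?H = "Hm ks jbs c1 cJ"
  let ?li = "loc ks jbs i" and ?lj = "loc ks jbs j" and ?bi = "blk ks jbs i" and ?bj = "blk ks jbs j"
  let ?cb = "cblocks c1 cJ"
  have H: "?H $$ (i, j) = (if ?bi = ?bj \<and> ?li + ?lj < snd (blocks ks jbs ! ?bi) then ?cb ! ?bi ! (?li + ?lj) else 0)"
    using i j by (simp add: Hm_def)
  have L: "(if Suc ?lj < snd (blocks ks jbs ! ?bj) then ?H $$ (i, Suc j) else 0) =
    (if ?bi = ?bj \<and> Suc (?li + ?lj) < snd (blocks ks jbs ! ?bi) then ?cb ! ?bi ! Suc (?li + ?lj) else 0)"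
  proof (cases "Suc ?lj < snd (blocks ks jbs ! ?bj)")
    case True note nx = next_idx[OF j True]
    show ?thesis using True nx i by (auto simp: Hm_def)
  qed auto
  have R: "(if Suc ?li < snd (blocks ks jbs ! ?bi) then ?H $$ (Suc i, j) else 0) =
    (if ?bi = ?bj \<and> Suc (?li + ?lj) < snd (blocks ks jbs ! ?bi) then ?cb ! ?bi ! Suc (?li + ?lj) else 0)"
  proof (cases "Suc ?li < snd (blocks ks jbs ! ?bi)")
    case True note nx = next_idx[OF i True]
    show ?thesis using True nx j by (auto simp: Hm_def)
  qed auto
  have ee: "?bi = ?bj \<Longrightarrow> eig ks jbs i = eig ks jbs j" by (simp add: eig_def)
  show "(?H * Gam ks jbs) $$ (i, j) = (transpose_mat (Gam ks jbs) * ?H) $$ (i, j)"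
    unfolding mult_Gam_entry[OF Hm_carrier i j] GamT_mult_entry[OF Hm_carrier i j] L R H
    using ee by (auto simp: mult.commute)
qed (simp_all add: Hm_def Gam_def)

text \<open>The first row of each Hankel block of H is the corresponding block of c, hence e e^T H = e
  c^T.\<close>

lemma heads_outer_H: "outer (heads ks jbs) (heads ks jbs) * Hm ks jbs c1 cJ = outer (heads ks jbs) (cv ks jbs c1 cJ)"
proof (rule eq_matI)
  fix i j assume i: "i < dim_row (outer (heads ks jbs) (cv ks jbs c1 cJ))"
     and j: "j < dim_col (outer (heads ks jbs) (cv ks jbs c1 cJ))"
  then have i: "i < dimN ks jbs" and j: "j < dimN ks jbs" by (simp_all add: outer_def heads_def cv_def)
  let ?k0 = "block_start ks jbs (blk ks jbs j)"
  note bs = block_head[OF j]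
  have "(outer (heads ks jbs) (heads ks jbs) * Hm ks jbs c1 cJ) $$ (i, j)
     = (\<Sum>k = 0..<dimN ks jbs. outer (heads ks jbs) (heads ks jbs) $$ (i, k) * Hm ks jbs c1 cJ $$ (k, j))"
    by (rule mat_mult_entry_sum) (auto simp: outer_def heads_def i j)
  also have "\<dots> = (\<Sum>k = 0..<dimN ks jbs. if k = ?k0 then heads ks jbs $ i * cv ks jbs c1 cJ $ j else 0)"
  proof (rule sum.cong[OF refl])
    fix k assume "k \<in> {0..<dimN ks jbs}"
    then have k: "k < dimN ks jbs" by simp
    show "outer (heads ks jbs) (heads ks jbs) $$ (i, k) * Hm ks jbs c1 cJ $$ (k, j) =
       (if k = ?k0 then heads ks jbs $ i * cv ks jbs c1 cJ $ j else 0)"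
      using block_head_iff[OF j k] idx_props(2)[OF j] bs i j k
      by (auto simp: outer_def heads_def Hm_def cv_def)
  qed
  also have "\<dots> = outer (heads ks jbs) (cv ks jbs c1 cJ) $$ (i, j)"
    using bs(3) i j by (simp add: outer_def heads_def cv_def)
  finally show "(outer (heads ks jbs) (heads ks jbs) * Hm ks jbs c1 cJ) $$ (i, j) = outer (heads ks jbs) (cv ks jbs c1 cJ) $$ (i, j)" .
qed (simp_all add: outer_def heads_def cv_def Hm_def)

lemma Mm_vec:
  assumes y: "y \<in> carrier_vec (dimN ks jbs)"
  shows "Mm p q rho0 ks jbs c1 cJ aJ n m *\<^sub>v y =
    Am ks jbs aJ *\<^sub>v (Fm p q rho0 ks jbs n m *\<^sub>v (Gm ks jbs *\<^sub>v (Hm ks jbs c1 cJ *\<^sub>v y)))"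
proof -
  let ?N = "dimN ks jbs"
  let ?A = "Am ks jbs aJ" and ?F = "Fm p q rho0 ks jbs n m" and ?G = "Gm ks jbs" and ?H = "Hm ks jbs c1 cJ"
  have c1: "?A * ?F \<in> carrier_mat ?N ?N" "?A * ?F * ?G \<in> carrier_mat ?N ?N" by (auto intro!: mult_carrier_mat[of _ _ ?N])
  have cy: "?H *\<^sub>v y \<in> carrier_vec ?N" by (rule mult_mat_vec_carrier[OF Hm_carrier y])
  have cy2: "?G *\<^sub>v (?H *\<^sub>v y) \<in> carrier_vec ?N" by (rule mult_mat_vec_carrier[OF Gm_carrier cy])
  have "Mm p q rho0 ks jbs c1 cJ aJ n m *\<^sub>v y = (?A * ?F * ?G) *\<^sub>v (?H *\<^sub>v y)"
    unfolding Mm_def by (rule assoc_mult_mat_vec) (use c1 y in auto)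
  also have "\<dots> = (?A * ?F) *\<^sub>v (?G *\<^sub>v (?H *\<^sub>v y))"
    by (rule assoc_mult_mat_vec) (use c1 y cy cy2 in auto)
  also have "\<dots> = ?A *\<^sub>v (?F *\<^sub>v (?G *\<^sub>v (?H *\<^sub>v y)))"
    by (rule assoc_mult_mat_vec) (use y cy cy2 in auto)
  finally show ?thesis .
qed

lemma G_H_sylvester_apply:
  assumes eig_sum: "\<And>x y. x \<in> fst ` set (blocks ks jbs) \<Longrightarrow> y \<in> fst ` set (blocks ks jbs) \<Longrightarrow> x + y \<noteq> 0"
    and y: "y \<in> carrier_vec (dimN ks jbs)"
  shows "Gam ks jbs *\<^sub>v (Gm ks jbs *\<^sub>v (Hm ks jbs c1 cJ *\<^sub>v y))
       + Gm ks jbs *\<^sub>v (transpose_mat (Gam ks jbs) *\<^sub>v (Hm ks jbs c1 cJ *\<^sub>v y))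
     = (cv ks jbs c1 cJ \<bullet> y) \<cdot>\<^sub>v heads ks jbs"
proof -
  let ?N = "dimN ks jbs" and ?G = "Gm ks jbs" and ?H = "Hm ks jbs c1 cJ" and ?K = "Gam ks jbs"
  have Hy: "?H *\<^sub>v y \<in> carrier_vec ?N" by (rule mult_mat_vec_carrier[OF Hm_carrier y])
  have KG: "?K * ?G \<in> carrier_mat ?N ?N" "?G * transpose_mat ?K \<in> carrier_mat ?N ?N"
    by (auto intro!: mult_carrier_mat[of _ _ ?N])
  have "?K *\<^sub>v (?G *\<^sub>v (?H *\<^sub>v y)) + ?G *\<^sub>v (transpose_mat ?K *\<^sub>v (?H *\<^sub>v y))
      = (?K * ?G) *\<^sub>v (?H *\<^sub>v y) + (?G * transpose_mat ?K) *\<^sub>v (?H *\<^sub>v y)"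
    using Hy by (simp add: assoc_mult_mat_vec[of _ ?N ?N _ ?N])
  also have "\<dots> = (?K * ?G + ?G * transpose_mat ?K) *\<^sub>v (?H *\<^sub>v y)"
    by (rule add_mult_distrib_mat_vec[symmetric]) (use KG Hy in auto)
  also have "\<dots> = ((?K * ?G + ?G * transpose_mat ?K) * ?H) *\<^sub>v y"
    by (rule assoc_mult_mat_vec[symmetric]) (use KG y in auto)
  also have "\<dots> = (outer (heads ks jbs) (heads ks jbs) * ?H) *\<^sub>v y"
    using G_sylvester[of ks jbs, OF eig_sum] by simp
  also have "\<dots> = (cv ks jbs c1 cJ \<bullet> y) \<cdot>\<^sub>v heads ks jbs"
    using heads_outer_H[of ks jbs c1 cJ] outer_mult_vec[of _ ?N] y by simp
  finally show ?thesis .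
qed

text \<open>The rank-one Sylvester equation Gamma M + M Gamma = (A r) c^T, the first structural property
  of M. It follows from the previous one since A and F commute with Gamma and A F e = A r.\<close>

lemma Mm_sylvester:
  assumes eig_sum: "\<And>x y. x \<in> fst ` set (blocks ks jbs) \<Longrightarrow> y \<in> fst ` set (blocks ks jbs) \<Longrightarrow> x + y \<noteq> 0"
    and y: "y \<in> carrier_vec (dimN ks jbs)"
  shows "Gam ks jbs *\<^sub>v (Mm p q rho0 ks jbs c1 cJ aJ n m *\<^sub>v y) + Mm p q rho0 ks jbs c1 cJ aJ n m *\<^sub>v (Gam ks jbs *\<^sub>v y)
     = (cv ks jbs c1 cJ \<bullet> y) \<cdot>\<^sub>v (Am ks jbs aJ *\<^sub>v rv p q rho0 ks jbs n m)"
proof -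
  let ?N = "dimN ks jbs"
  let ?A = "Am ks jbs aJ" and ?F = "Fm p q rho0 ks jbs n m" and ?G = "Gm ks jbs" and ?H = "Hm ks jbs c1 cJ"
    and ?K = "Gam ks jbs"
  define hy where "hy = ?H *\<^sub>v y"
  have hy: "hy \<in> carrier_vec ?N" unfolding hy_def by (rule mult_mat_vec_carrier[OF Hm_carrier y])
  have hy': "?G *\<^sub>v hy \<in> carrier_vec ?N" "transpose_mat ?K *\<^sub>v hy \<in> carrier_vec ?N"
    using mult_mat_vec_carrier[OF Gm_carrier hy] mult_mat_vec_carrier[OF transpose_carrier_mat[THEN iffD2, OF Gam_carrier] hy]
    by auto
  have KA: "?K * ?A = ?A * ?K" unfolding Am_toep by (rule Gam_toep_commute)
  have KF: "?K * ?F = ?F * ?K" unfolding Fm_toep by (rule Gam_toep_commute)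
  have GH: "?K *\<^sub>v (?G *\<^sub>v hy) + ?G *\<^sub>v (transpose_mat ?K *\<^sub>v hy) = (cv ks jbs c1 cJ \<bullet> y) \<cdot>\<^sub>v heads ks jbs"
    unfolding hy_def by (rule G_H_sylvester_apply[OF eig_sum y])
  have HK: "?H *\<^sub>v (?K *\<^sub>v y) = transpose_mat ?K *\<^sub>v hy"
    using y by (simp add: hy_def assoc_mult_mat_vec[symmetric, of _ ?N ?N _ ?N] H_Gam_symmetric)
  have "?K *\<^sub>v (Mm p q rho0 ks jbs c1 cJ aJ n m *\<^sub>v y) = ?A *\<^sub>v (?F *\<^sub>v (?K *\<^sub>v (?G *\<^sub>v hy)))"
    unfolding Mm_vec[OF y] hy_def[symmetric]
      commute_apply[OF Gam_carrier Am_carrier mult_mat_vec_carrier[OF Fm_carrier hy'(1)] KA]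
      commute_apply[OF Gam_carrier Fm_carrier hy'(1) KF] ..
  moreover have "Mm p q rho0 ks jbs c1 cJ aJ n m *\<^sub>v (?K *\<^sub>v y) = ?A *\<^sub>v (?F *\<^sub>v (?G *\<^sub>v (transpose_mat ?K *\<^sub>v hy)))"
    unfolding Mm_vec[OF mult_mat_vec_carrier[OF Gam_carrier y]] HK ..
  ultimately have "?K *\<^sub>v (Mm p q rho0 ks jbs c1 cJ aJ n m *\<^sub>v y) + Mm p q rho0 ks jbs c1 cJ aJ n m *\<^sub>v (?K *\<^sub>v y)
      = ?A *\<^sub>v (?F *\<^sub>v (?K *\<^sub>v (?G *\<^sub>v hy) + ?G *\<^sub>v (transpose_mat ?K *\<^sub>v hy)))"
    using hy hy' by (simp add: mult_add_distrib_mat_vec[of _ ?N ?N])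
  also have "\<dots> = (cv ks jbs c1 cJ \<bullet> y) \<cdot>\<^sub>v (?A *\<^sub>v (?F *\<^sub>v heads ks jbs))"
    unfolding GH by (simp add: mult_mat_vec[of _ ?N ?N])
  finally show ?thesis by (simp add: rv_Fm_heads)
qed

section \<open>Dispersion relations\<close>

lemma fps_expansion_nth_0: "f has_fps_expansion F \<Longrightarrow> fps_nth F 0 = f 0"
  by (auto simp: has_fps_expansion_def eval_fps_at_0 dest: eventually_nhds_x_imp_x)

lemma fps_expansion_power: fixes f :: "complex \<Rightarrow> complex" assumes f: "f has_fps_expansion F" shows "(\<lambda>x. f x ^ k) has_fps_expansion F ^ k"
proof (induction k)
  case 0 then show ?case by simp
next
  case (Suc k)
  have "(\<lambda>x. f x * f x ^ k) has_fps_expansion F * F ^ k"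
    using has_fps_expansion_mult[of f F "\<lambda>x. f x ^ k" "F ^ k"] f Suc.IH by simp
  then show ?case by simp
qed

lemma fps_expansion_powi:
  fixes f :: "complex \<Rightarrow> complex"
  assumes "f has_fps_expansion F" "f 0 \<noteq> 0"
  shows "\<exists>G. (\<lambda>x. f x powi n) has_fps_expansion G"
proof (cases "0 \<le> n")
  case True
  have "(\<lambda>x. f x powi n) = (\<lambda>x. f x ^ nat n)" using True by (simp add: power_int_def)
  then show ?thesis using fps_expansion_power[OF assms(1)] by metis
next
  case False
  have "(\<lambda>x. f x powi n) = (\<lambda>x. inverse (f x) ^ nat (- n))" using False by (simp add: power_int_def)
  moreover have "(\<lambda>x. inverse (f x)) has_fps_expansion inverse F"
    using has_fps_expansion_inverse[OF assms(1)] fps_expansion_nth_0[OF assms(1)] assms(2) by simp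
  ultimately show ?thesis using fps_expansion_power by metis
qed

lemma fps_expansion_moebius:
  fixes p k :: complex
  assumes "p - k \<noteq> 0"
  shows "(\<lambda>x. (p + (k + x)) / (p - (k + x))) has_fps_expansion (fps_const (p + k) + fps_X) / (fps_const (p - k) - fps_X)"
proof -
  have e: "(\<lambda>x. (p + (k + x)) / (p - (k + x))) = (\<lambda>x. ((p + k) + x) / ((p - k) - x))"
    by (simp add: algebra_simps)
  show ?thesis unfolding e
    by (intro has_fps_expansion_divide' has_fps_expansion_add has_fps_expansion_diff
          has_fps_expansion_const has_fps_expansion_fps_X) (use assms in simp)
qed

lemma fps_expansion_rho:
  fixes p q rho0 k :: complex
  assumes "p \<noteq> k" "p \<noteq> - k" "q \<noteq> k" "q \<noteq> - k"
  shows "\<exists>R. (\<lambda>x. rho p q rho0 n m (k + x)) has_fps_expansion R"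
proof -
  have p0: "p - k \<noteq> 0" "p + k \<noteq> 0" "q - k \<noteq> 0" "q + k \<noteq> 0" using assms
    by (auto simp: algebra_simps eq_neg_iff_add_eq_0 simp flip: add_eq_0_iff)
  obtain A where A: "(\<lambda>x. ((p + (k + x)) / (p - (k + x))) powi n) has_fps_expansion A"
    using fps_expansion_powi[OF fps_expansion_moebius[OF p0(1)]] p0 by auto
  obtain B where B: "(\<lambda>x. ((q + (k + x)) / (q - (k + x))) powi m) has_fps_expansion B"
    using fps_expansion_powi[OF fps_expansion_moebius[OF p0(3)]] p0 by auto
  have "(\<lambda>x. ((p + (k + x)) / (p - (k + x))) powi n * ((q + (k + x)) / (q - (k + x))) powi m * rho0)
     has_fps_expansion A * B * fps_const rho0"
    by (intro has_fps_expansion_mult A B has_fps_expansion_const)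
  then show ?thesis unfolding rho_def by blast
qed

lemma taylor_fps_nth:
  assumes "(\<lambda>x. rho p q rho0 n m (k + x)) has_fps_expansion R"
  shows "taylor p q rho0 n m k l = fps_nth R l"
  unfolding taylor_def fps_nth_fps_expansion[OF assms] higher_deriv_shift_0[of l _ k]
  by (simp add: o_def)

lemma fps_expansion_linear_factor:
  fixes a s :: complex
  assumes "f has_fps_expansion F"
  shows "(\<lambda>x. (a + s * x) * f x) has_fps_expansion (fps_const a + fps_const s * fps_X) * F"
  by (intro has_fps_expansion_mult assms has_fps_expansion_add has_fps_expansion_const
        has_fps_expansion_cmult_left has_fps_expansion_fps_X)

lemma fps_nth_linear_factor: fixes a s :: complex and F :: "complex fps" shows "fps_nth ((fps_const a + fps_const s * fps_X) * F) L =
   a * fps_nth F L + s * (if L = 0 then 0 else fps_nth F (L - 1))"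
proof -
  have "(fps_const a + fps_const s * fps_X) * F = fps_const a * F + fps_const s * (fps_X * F)"
    by (simp add: algebra_simps)
  then show ?thesis by (simp only: fps_add_nth fps_mult_left_const_nth fps_X_mult_nth)
qed

lemma fps_expansion_nth_cong:
  fixes f g :: "complex \<Rightarrow> complex"
  assumes "f has_fps_expansion F" "g has_fps_expansion G" "eventually (\<lambda>x. f x = g x) (nhds 0)"
  shows "fps_nth F L = fps_nth G L"
  unfolding fps_nth_fps_expansion[OF assms(1)] fps_nth_fps_expansion[OF assms(2)]
  using higher_deriv_cong_ev[OF assms(3) refl] by simp

lemma eventually_shift_neq: "eventually (\<lambda>x. (k::complex) + x \<noteq> c) (nhds 0)" if "k \<noteq> c"
proof -
  have "((\<lambda>x. k + x) \<longlongrightarrow> k + 0) (nhds 0)"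
    by (intro tendsto_add tendsto_const) (rule filterlim_ident)
  then show ?thesis using tendsto_imp_eventually_ne that by simp
qed

lemma taylor_shift_relation:
  fixes f0 f1 :: "complex \<Rightarrow> complex" and k p :: complex
  assumes R0: "(\<lambda>x. f0 (k + x)) has_fps_expansion R0" and R1: "(\<lambda>x. f1 (k + x)) has_fps_expansion R1"
    and pw: "\<And>z. z \<noteq> p \<Longrightarrow> z \<noteq> - p \<Longrightarrow> (p - z) * f1 z = (p + z) * f0 z"
    and kp: "k \<noteq> p" "k \<noteq> - p"
  shows "(p - k) * fps_nth R1 L - (if L = 0 then 0 else fps_nth R1 (L - 1))
     = (p + k) * fps_nth R0 L + (if L = 0 then 0 else fps_nth R0 (L - 1))"
proof -
  have E1: "(\<lambda>x. ((p - k) + (-1) * x) * f1 (k + x)) has_fps_expansion (fps_const (p - k) + fps_const (-1) * fps_X) * R1"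
    by (rule fps_expansion_linear_factor[OF R1])
  have E0: "(\<lambda>x. ((p + k) + 1 * x) * f0 (k + x)) has_fps_expansion (fps_const (p + k) + fps_const 1 * fps_X) * R0"
    by (rule fps_expansion_linear_factor[OF R0])
  have "eventually (\<lambda>x. ((p - k) + (-1) * x) * f1 (k + x) = ((p + k) + 1 * x) * f0 (k + x)) (nhds 0)"
    using eventually_shift_neq[OF kp(1)] eventually_shift_neq[OF kp(2)]
  proof eventually_elim
    case (elim x)
    have "(p - (k + x)) * f1 (k + x) = (p + (k + x)) * f0 (k + x)" by (rule pw) (use elim in auto)
    then show ?case by (simp add: algebra_simps)
  qed
  from fps_expansion_nth_cong[OF E1 E0 this, of L] show ?thesis unfolding fps_nth_linear_factor by simp
qed

lemma rho_shift_n: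
  assumes "z \<noteq> p" "z \<noteq> - p"
  shows "(p - z) * rho p q rho0 (n + 1) m z = (p + z) * rho p q rho0 n m z"
proof -
  have d: "p - z \<noteq> 0" "p + z \<noteq> 0" using assms
    by (auto simp: algebra_simps eq_neg_iff_add_eq_0 simp flip: add_eq_0_iff)
  have g: "(p + z) / (p - z) \<noteq> 0" using d by simp
  show ?thesis unfolding rho_def power_int_add_1[of "(p + z) / (p - z)", OF disjI1[OF g]]
    using d by (simp add: field_simps)
qed

lemma taylor_shift_n:
  assumes "p \<noteq> k" "p \<noteq> - k" "q \<noteq> k" "q \<noteq> - k"
  shows "(p - k) * taylor p q rho0 (n + 1) m k L - (if L = 0 then 0 else taylor p q rho0 (n + 1) m k (L - 1))
     = (p + k) * taylor p q rho0 n m k L + (if L = 0 then 0 else taylor p q rho0 n m k (L - 1))"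
proof -
  obtain R0 where R0: "(\<lambda>x. rho p q rho0 n m (k + x)) has_fps_expansion R0" using fps_expansion_rho[OF assms] by blast
  obtain R1 where R1: "(\<lambda>x. rho p q rho0 (n + 1) m (k + x)) has_fps_expansion R1" using fps_expansion_rho[OF assms] by blast
  have kp: "k \<noteq> p" "k \<noteq> - p" using assms by auto
  show ?thesis unfolding taylor_fps_nth[OF R0] taylor_fps_nth[OF R1]
    by (rule taylor_shift_relation[OF R0 R1 rho_shift_n kp])
qed

lemma Fm_shift_n:
  assumes pq: "\<And>x. x \<in> fst ` set (blocks ks jbs) \<Longrightarrow> p \<noteq> x \<and> p \<noteq> - x \<and> q \<noteq> x \<and> q \<noteq> - x"
  shows "p \<cdot>\<^sub>m Fm p q rho0 ks jbs (n + 1) m - Gam ks jbs * Fm p q rho0 ks jbs (n + 1) m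
     = p \<cdot>\<^sub>m Fm p q rho0 ks jbs n m + Gam ks jbs * Fm p q rho0 ks jbs n m"
  unfolding Fm_toep Gam_toep toep_lincomb
proof (rule toep_cong)
  fix bl l assume bl: "bl < length (blocks ks jbs)"
  note h = taylor_shift_n[of p "fst (blocks ks jbs ! bl)" q rho0 n m l] pq[OF imageI[OF nth_mem[OF bl]]]
  show "p * taylor p q rho0 (n + 1) m (fst (blocks ks jbs ! bl)) l -
      toep_symbol_Gam ks jbs (\<lambda>bl l. taylor p q rho0 (n + 1) m (fst (blocks ks jbs ! bl)) l) bl l =
      p * taylor p q rho0 n m (fst (blocks ks jbs ! bl)) l +
      toep_symbol_Gam ks jbs (\<lambda>bl l. taylor p q rho0 n m (fst (blocks ks jbs ! bl)) l) bl l"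
    using h unfolding toep_symbol_Gam_def by (simp add: algebra_simps)
qed

text \<open>A commutes with Gamma, so multiplying by A preserves dispersion relations.\<close>

lemma Am_preserves_shift:
  fixes F F' :: "complex mat"
  assumes c: "F \<in> carrier_mat (dimN ks jbs) (dimN ks jbs)" "F' \<in> carrier_mat (dimN ks jbs) (dimN ks jbs)"
     "x \<in> carrier_vec (dimN ks jbs)"
    and e: "p \<cdot>\<^sub>v (F' *\<^sub>v x) - Gam ks jbs *\<^sub>v (F' *\<^sub>v x) = p \<cdot>\<^sub>v (F *\<^sub>v x) + Gam ks jbs *\<^sub>v (F *\<^sub>v x)"
  shows "p \<cdot>\<^sub>v (Am ks jbs aJ *\<^sub>v (F' *\<^sub>v x)) - Gam ks jbs *\<^sub>v (Am ks jbs aJ *\<^sub>v (F' *\<^sub>v x))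
     = p \<cdot>\<^sub>v (Am ks jbs aJ *\<^sub>v (F *\<^sub>v x)) + Gam ks jbs *\<^sub>v (Am ks jbs aJ *\<^sub>v (F *\<^sub>v x))"
proof -
  let ?A = "Am ks jbs aJ" and ?K = "Gam ks jbs"
  have KA: "?K * ?A = ?A * ?K" unfolding Am_toep by (rule Gam_toep_commute)
  have f: "F' *\<^sub>v x \<in> carrier_vec (dimN ks jbs)" "F *\<^sub>v x \<in> carrier_vec (dimN ks jbs)"
    by (rule mult_mat_vec_carrier[OF c(2) c(3)]) (rule mult_mat_vec_carrier[OF c(1) c(3)])
  have k: "?K *\<^sub>v (F' *\<^sub>v x) \<in> carrier_vec (dimN ks jbs)" "?K *\<^sub>v (F *\<^sub>v x) \<in> carrier_vec (dimN ks jbs)"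
    by (rule mult_mat_vec_carrier[OF Gam_carrier f(1)]) (rule mult_mat_vec_carrier[OF Gam_carrier f(2)])
  have "p \<cdot>\<^sub>v (?A *\<^sub>v (F' *\<^sub>v x)) - ?K *\<^sub>v (?A *\<^sub>v (F' *\<^sub>v x)) = ?A *\<^sub>v (p \<cdot>\<^sub>v (F' *\<^sub>v x) - ?K *\<^sub>v (F' *\<^sub>v x))"
    unfolding commute_apply[OF Gam_carrier Am_carrier f(1) KA]
    by (simp only: mult_mat_vec[OF Am_carrier f(1)] mult_minus_distrib_mat_vec[OF Am_carrier smult_carrier_vec[THEN iffD2, OF f(1)] k(1)])
  also have "\<dots> = ?A *\<^sub>v (p \<cdot>\<^sub>v (F *\<^sub>v x) + ?K *\<^sub>v (F *\<^sub>v x))" unfolding e ..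
  also have "\<dots> = p \<cdot>\<^sub>v (?A *\<^sub>v (F *\<^sub>v x)) + ?K *\<^sub>v (?A *\<^sub>v (F *\<^sub>v x))"
    unfolding commute_apply[OF Gam_carrier Am_carrier f(2) KA]
    by (simp only: mult_mat_vec[OF Am_carrier f(2)] mult_add_distrib_mat_vec[OF Am_carrier smult_carrier_vec[THEN iffD2, OF f(2)] k(2)])
  finally show ?thesis .
qed

text \<open>The construction is symmetric under exchanging (p, n) with (q, m); this reduces the
  m-direction to the n-direction.\<close>

lemma rho_swap: "rho p q rho0 n m = rho q p rho0 m n"
  by (rule ext) (simp add: rho_def ac_simps)

lemma Mm_swap: "Mm p q rho0 ks jbs c1 cJ aJ n m = Mm q p rho0 ks jbs c1 cJ aJ m n"
  by (simp only: Mm_def Fm_def rho_swap[of p q rho0 n m])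

lemma rv_swap: "rv p q rho0 ks jbs n m = rv q p rho0 ks jbs m n"
  by (simp only: rv_def rho_swap[of p q rho0 n m])

lemma Mm_shift_n:
  assumes pq: "\<And>x. x \<in> fst ` set (blocks ks jbs) \<Longrightarrow> p \<noteq> x \<and> p \<noteq> - x \<and> q \<noteq> x \<and> q \<noteq> - x"
    and y: "y \<in> carrier_vec (dimN ks jbs)"
  shows "p \<cdot>\<^sub>v (Mm p q rho0 ks jbs c1 cJ aJ (n + 1) m *\<^sub>v y) - Gam ks jbs *\<^sub>v (Mm p q rho0 ks jbs c1 cJ aJ (n + 1) m *\<^sub>v y)
     = p \<cdot>\<^sub>v (Mm p q rho0 ks jbs c1 cJ aJ n m *\<^sub>v y) + Gam ks jbs *\<^sub>v (Mm p q rho0 ks jbs c1 cJ aJ n m *\<^sub>v y)"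
proof -
  have GHy: "Gm ks jbs *\<^sub>v (Hm ks jbs c1 cJ *\<^sub>v y) \<in> carrier_vec (dimN ks jbs)"
    by (rule mult_mat_vec_carrier[OF Gm_carrier mult_mat_vec_carrier[OF Hm_carrier y]])
  show ?thesis
    unfolding Mm_vec[OF y]
    by (rule Am_preserves_shift[OF Fm_carrier Fm_carrier GHy
          shift_apply[OF Fm_carrier Fm_carrier Gam_carrier GHy Fm_shift_n[OF pq]]])
qed

lemma u_shift_n:
  assumes pq: "\<And>x. x \<in> fst ` set (blocks ks jbs) \<Longrightarrow> p \<noteq> x \<and> p \<noteq> - x \<and> q \<noteq> x \<and> q \<noteq> - x"
  shows "p \<cdot>\<^sub>v (Am ks jbs aJ *\<^sub>v rv p q rho0 ks jbs (n + 1) m) - Gam ks jbs *\<^sub>v (Am ks jbs aJ *\<^sub>v rv p q rho0 ks jbs (n + 1) m)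
     = p \<cdot>\<^sub>v (Am ks jbs aJ *\<^sub>v rv p q rho0 ks jbs n m) + Gam ks jbs *\<^sub>v (Am ks jbs aJ *\<^sub>v rv p q rho0 ks jbs n m)"
  unfolding rv_Fm_heads
  by (rule Am_preserves_shift[OF Fm_carrier Fm_carrier heads_carrier
        shift_apply[OF Fm_carrier Fm_carrier Gam_carrier heads_carrier Fm_shift_n[OF pq]]])

lemma Mm_shift_m:
  assumes pq: "\<And>x. x \<in> fst ` set (blocks ks jbs) \<Longrightarrow> p \<noteq> x \<and> p \<noteq> - x \<and> q \<noteq> x \<and> q \<noteq> - x"
    and y: "y \<in> carrier_vec (dimN ks jbs)"
  shows "q \<cdot>\<^sub>v (Mm p q rho0 ks jbs c1 cJ aJ n (m + 1) *\<^sub>v y) - Gam ks jbs *\<^sub>v (Mm p q rho0 ks jbs c1 cJ aJ n (m + 1) *\<^sub>v y)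
     = q \<cdot>\<^sub>v (Mm p q rho0 ks jbs c1 cJ aJ n m *\<^sub>v y) + Gam ks jbs *\<^sub>v (Mm p q rho0 ks jbs c1 cJ aJ n m *\<^sub>v y)"
  unfolding Mm_swap[of p q _ _ _ _ _ _ n] using pq by (intro Mm_shift_n[OF _ y]) blast

lemma u_shift_m:
  assumes pq: "\<And>x. x \<in> fst ` set (blocks ks jbs) \<Longrightarrow> p \<noteq> x \<and> p \<noteq> - x \<and> q \<noteq> x \<and> q \<noteq> - x"
  shows "q \<cdot>\<^sub>v (Am ks jbs aJ *\<^sub>v rv p q rho0 ks jbs n (m + 1)) - Gam ks jbs *\<^sub>v (Am ks jbs aJ *\<^sub>v rv p q rho0 ks jbs n (m + 1))
     = q \<cdot>\<^sub>v (Am ks jbs aJ *\<^sub>v rv p q rho0 ks jbs n m) + Gam ks jbs *\<^sub>v (Am ks jbs aJ *\<^sub>v rv p q rho0 ks jbs n m)"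
  unfolding rv_swap[of p q _ _ _ n] using pq by (intro u_shift_n) blast

lemma concrete_nqc_lattice:
  assumes eig_sum: "\<And>x y. x \<in> fst ` set (blocks ks jbs) \<Longrightarrow> y \<in> fst ` set (blocks ks jbs) \<Longrightarrow> x + y \<noteq> 0"
    and pq: "\<And>x. x \<in> fst ` set (blocks ks jbs) \<Longrightarrow> p \<noteq> x \<and> p \<noteq> - x \<and> q \<noteq> x \<and> q \<noteq> - x"
    and inv_M: "\<And>n m. invertible_mat (1\<^sub>m (dimN ks jbs) + Mm p q rho0 ks jbs c1 cJ aJ n m)"
  shows "nqc_lattice (dimN ks jbs) (Gam ks jbs) (cv ks jbs c1 cJ) (Mm p q rho0 ks jbs c1 cJ aJ)
           (\<lambda>n m. Am ks jbs aJ *\<^sub>v rv p q rho0 ks jbs n m) p q"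
  by unfold_locales
    (rule Mm_sylvester[OF eig_sum] Mm_shift_n[OF pq] Mm_shift_m[OF pq] u_shift_n[OF pq] u_shift_m[OF pq]
      inv_M mult_mat_vec_carrier[OF Am_carrier rv_carrier] | simp)+

text \<open>The main theorem is the locale theorem for the concrete data. The length conditions on c, A
  and the block sizes only describe well-formed data; the argument does not depend on them.\<close>

theorem mainTheorem11:
  fixes p q rho0 a b :: complex
    and ks :: "complex list" and c1 :: "complex list"
    and jbs :: "(complex \<times> nat) list" and cJ aJ :: "complex list list"
  defines "S \<equiv> Sab p q rho0 ks jbs c1 cJ aJ a b"
  assumes len_c1: "length c1 = length ks"
    and len_cJ: "length cJ = length jbs" and len_aJ: "length aJ = length jbs"
    and blk_sizes: "\<And>j. j < length jbs \<Longrightarrow> snd (jbs ! j) \<ge> 1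
                \<and> length (cJ ! j) = snd (jbs ! j) \<and> length (aJ ! j) = snd (jbs ! j)"
    and eig_sum: "\<And>x y. x \<in> fst ` set (blocks ks jbs) \<Longrightarrow> y \<in> fst ` set (blocks ks jbs)
                \<Longrightarrow> x + y \<noteq> 0"
    and pq: "\<And>x. x \<in> fst ` set (blocks ks jbs) \<Longrightarrow> p \<noteq> x \<and> p \<noteq> - x \<and> q \<noteq> x \<and> q \<noteq> - x"
    and inv_a: "invertible_mat (a \<cdot>\<^sub>m 1\<^sub>m (dimN ks jbs) + Gam ks jbs)"
    and inv_b: "invertible_mat (b \<cdot>\<^sub>m 1\<^sub>m (dimN ks jbs) + Gam ks jbs)"
    and inv_M: "\<And>n m. invertible_mat (1\<^sub>m (dimN ks jbs) + Mm p q rho0 ks jbs c1 cJ aJ n m)"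
  shows "\<forall>n m :: int.
     1 - (q + b) * S (n+1) (m+1) + (q - a) * S (n+1) m \<noteq> 0 \<longrightarrow>
     1 - (p + a) * S (n+1) m + (p - b) * S n m \<noteq> 0 \<longrightarrow>
     (1 - (p + b) * S (n+1) (m+1) + (p - a) * S n (m+1))
       / (1 - (q + b) * S (n+1) (m+1) + (q - a) * S (n+1) m)
     = (1 - (q + a) * S n (m+1) + (q - b) * S n m)
       / (1 - (p + a) * S (n+1) m + (p - b) * S n m)"
proof -
  interpret lattice: nqc_lattice "dimN ks jbs" "Gam ks jbs" "cv ks jbs c1 cJ" "Mm p q rho0 ks jbs c1 cJ aJ"
      "\<lambda>n m. Am ks jbs aJ *\<^sub>v rv p q rho0 ks jbs n m" p q
    by (rule concrete_nqc_lattice[OF eig_sum pq inv_M])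
  have "S = lattice.S_fun a b"
    unfolding S_def by (intro ext) (simp add: Sab_def Let_def lattice.S_fun_def)
  then show ?thesis using lattice.NQC[OF inv_a inv_b] by simp
qed

end
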